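(* Let $\mu$ be an $n$-dimensional AD regular Borel measure on $\mathbb R^d$ with $\operatorname{diam}(\operatorname{supp}\mu)=\infty$, let $\rho>2$ and $K$ admissible. There is a constant $C>0$ (depending on $n,d,K,\rho,\varphi_{\mathbb R}$ and the AD regularity constant) such that for every $\nu\in M(\mathbb R^d)$, every ball $B=B(x_B,r)\subset\mathbb R^d$, every $x\in B\cap\operatorname{supp}\mu$ and every $z\in B$, $$(\mathcal V_\rho\circ\mathcal T_\varphi)(\chi_{\mathbb R^d\setminus 2B}\nu)(x)\le(\mathcal V_\rho\circ\mathcal T_\varphi)(\chi_{\mathbb R^d\setminus 2B}\nu)(z)+C\,M^\mu\nu(x)$$ and the same inequality with the roles of $x$ and $z$ in the two variation terms interchanged (keeping $M^\mu\nu(x)$ on the right), where $2B=B(x_B,2r)$.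
   Context: Fix integers $1\le n<d$. A kernel $K:\mathbb R^d\setminus\{0\}\to\mathbb R$ is admissible if it is odd and there is $C>0$ with $|K(x)|\le C|x|^{-n}$, $|\partial_{x^i}K(x)|\le C|x|^{-n-1}$, $|\partial_{x^i}\partial_{x^j}K(x)|\le C|x|^{-n-2}$ for all $x\ne0$, $1\le i,j\le d$. Fix a nondecreasing $C^2$ function $\varphi_{\mathbb R}:[0,\infty)\to[0,\infty)$ with $\chi_{[4,\infty)}\le\varphi_{\mathbb R}\le\chi_{[1/4,\infty)}$ and $\chi_{[1/3,3]}\le C|\varphi_{\mathbb R}'|$; set $\varphi_\epsilon(x)=\varphi_{\mathbb R}(|x|^2/\epsilon^2)$. For a finite real Borel measure $\nu$, $T_{\varphi_\epsilon}\nu(x)=\int\varphi_\epsilon(x-y)K(x-y)\,d\nu(y)$, $\mathcal T_\varphi\nu=\{T_{\varphi_\epsilon}\nu\}_{\epsilon>0}$. The $\rho$-variation of a family $\{F_\epsilon\}_{\epsilon>0}$ is $\mathcal V_\rho(\{F_\epsilon\})(x)=\sup(\sum_{m\in\mathbb Z}|F_{\epsilon_{m+1}}(x)-F_{\epsilon_m}(x)|^\rho)^{1/\rho}$, sup over decreasing sequences $\{\epsilon_m\}_{m\in\mathbb Z}\subset(0,\infty)$. $M(\mathbb R^d)$ is the space of finite real Borel measures. $M^\mu\nu(x)=\sup_{r>0}|\nu|(B(x,r))/\mu(B(x,r))$ for $x\in\operatorname{supp}\mu$. $\mu$ is $n$-dimensional AD regular if $C^{-1}r^n\le\mu(B(x,r))\le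 Cr^n$ for all $x\in\operatorname{supp}\mu$ and $r>0$. *)

theory Defs
  imports "HOL-Analysis.Analysis"
begin

(* D1 i x stands for (d/dx^i) K (x), D2 i j x for (d/dx^j)(d/dx^i) K (x). *)
definition admissible_kernel :: "nat \<Rightarrow> ('a::euclidean_space \<Rightarrow> real) \<Rightarrow> bool" where
  "admissible_kernel n K \<longleftrightarrow>
     (\<forall>x. x \<noteq> 0 \<longrightarrow> K (- x) = - K x) \<and>
     (\<exists>C>0. \<exists>(D1 :: 'a \<Rightarrow> 'a \<Rightarrow> real) (D2 :: 'a \<Rightarrow> 'a \<Rightarrow> 'a \<Rightarrow> real).
        \<forall>x. x \<noteq> 0 \<longrightarrow>
          \<bar>K x\<bar> \<le> C / norm x ^ n \<and>
          (\<forall>i\<in>Basis. ((\<lambda>t. K (x + t *\<^sub>R i)) has_real_derivative D1 i x) (at 0) \<and>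
             \<bar>D1 i x\<bar> \<le> C / norm x ^ (n + 1) \<and>
             (\<forall>j\<in>Basis. ((\<lambda>t. D1 i (x + t *\<^sub>R j)) has_real_derivative D2 i j x) (at 0) \<and>
                \<bar>D2 i j x\<bar> \<le> C / norm x ^ (n + 2))))"

(* The fixed profile phi_R : [0,oo) -> [0,oo): nondecreasing, C^2 (one-sided
   derivatives at 0), chi_[4,oo) <= phi <= chi_[1/4,oo), chi_[1/3,3] <= C |phi'|. *)
definition phiR_admissible :: "(real \<Rightarrow> real) \<Rightarrow> bool" where
  "phiR_admissible \<phi> \<longleftrightarrow>
     mono_on {0..} \<phi> \<and>
     (\<forall>t\<ge>0. 0 \<le> \<phi> t) \<and>
     (\<forall>t\<ge>0. (indicator {4..} t :: real) \<le> \<phi> t \<and> \<phi> t \<le> (indicator {1/4..} t :: real)) \<and>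
     (\<exists>\<phi>1 \<phi>2. (\<forall>t\<ge>0. (\<phi> has_real_derivative \<phi>1 t) (at t within {0..}) \<and>
                      (\<phi>1 has_real_derivative \<phi>2 t) (at t within {0..})) \<and>
               continuous_on {0..} \<phi>2 \<and>
               (\<exists>C>0. \<forall>t\<in>{1/3..3}. (1::real) \<le> C * \<bar>\<phi>1 t\<bar>))"

definition phi_eps :: "(real \<Rightarrow> real) \<Rightarrow> real \<Rightarrow> 'a::euclidean_space \<Rightarrow> real" where
  "phi_eps \<phi> \<epsilon> x = \<phi> (norm x ^ 2 / \<epsilon> ^ 2)"

(* A finite real Borel measure nu is represented by its Jordan decomposition
   nu = nu1 - nu2 (finite positive Borel measures, mutually singular);
   then |nu| = nu1 + nu2. *)
definition finite_signed_borel :: "'a::euclidean_space measure \<Rightarrow> 'a measure \<Rightarrow> bool" where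
  "finite_signed_borel \<nu>1 \<nu>2 \<longleftrightarrow>
     sets \<nu>1 = sets borel \<and> sets \<nu>2 = sets borel \<and>
     finite_measure \<nu>1 \<and> finite_measure \<nu>2 \<and>
     (\<exists>A\<in>sets borel. emeasure \<nu>1 A = 0 \<and> emeasure \<nu>2 (UNIV - A) = 0)"

definition T_phi :: "(real \<Rightarrow> real) \<Rightarrow> ('a::euclidean_space \<Rightarrow> real) \<Rightarrow> 'a measure \<Rightarrow> 'a measure
                     \<Rightarrow> real \<Rightarrow> 'a \<Rightarrow> real" where
  "T_phi \<phi> K \<nu>1 \<nu>2 \<epsilon> x =
     (\<integral>y. phi_eps \<phi> \<epsilon> (x - y) * K (x - y) \<partial>\<nu>1) - (\<integral>y. phi_eps \<phi> \<epsilon> (x - y) * K (x - y) \<partial>\<nu>2)"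

(* rho-variation of a family {F_eps}_{eps>0}: supremum over strictly decreasing
   Z-indexed sequences in (0,oo) of the l^rho norm of the increments; the infinite
   series is written as the supremum of its symmetric partial sums. *)
definition rho_variation :: "real \<Rightarrow> (real \<Rightarrow> real) \<Rightarrow> ereal" where
  "rho_variation \<rho> F =
     (SUP p \<in> {(e :: int \<Rightarrow> real, N :: nat). (\<forall>m. 0 < e m) \<and> (\<forall>m. e (m + 1) < e m)}.
        ereal ((\<Sum>m\<in>{- int (snd p)..int (snd p)}.
                  \<bar>F (fst p (m + 1)) - F (fst p m)\<bar> powr \<rho>) powr (1 / \<rho>)))"

definition supp_meas :: "'a::metric_space measure \<Rightarrow> 'a set" where
  "supp_meas \<mu> = {x. \<forall>r>0. emeasure \<mu> (ball x r) > 0}"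

definition AD_regular :: "nat \<Rightarrow> real \<Rightarrow> 'a::euclidean_space measure \<Rightarrow> bool" where
  "AD_regular n C0 \<mu> \<longleftrightarrow> sets \<mu> = sets borel \<and> 0 < C0 \<and>
     (\<forall>x\<in>supp_meas \<mu>. \<forall>r>0.
        ennreal (r ^ n / C0) \<le> emeasure \<mu> (ball x r) \<and> emeasure \<mu> (ball x r) \<le> ennreal (C0 * r ^ n))"

definition max_mu :: "'a::euclidean_space measure \<Rightarrow> 'a measure \<Rightarrow> 'a measure \<Rightarrow> 'a \<Rightarrow> ereal" where
  "max_mu \<mu> \<nu>1 \<nu>2 x =
     (SUP r \<in> {0<..}. ereal ((measure \<nu>1 (ball x r) + measure \<nu>2 (ball x r)) / measure \<mu> (ball x r)))"

end

theory Submission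
  imports Defs
begin

(* Both variations are suprema of l^rho norms of increment sequences F(e_{m+1}) - F(e_m)
   over decreasing sequences e.  As the l^rho norm is 1-Lipschitz for the l^1 distance,
   it suffices to bound, uniformly in e, the l^1 distance of the increments at x and z.
   This is an integral over the complement of 2B, and for fixed y the variation in m of
   phi(|x-y|^2/e_m^2) K(x-y) - phi(|z-y|^2/e_m^2) K(z-y) is at most A r / |x-y|^(n+1)
   by the size and smoothness of K and phi.  Splitting into dyadic annuli around x and
   using AD regularity at x bounds the integral by 2^(n+1) A C0 M^mu nu(x). *)

section \<open>The l^rho norm is Lipschitz for the l^1 distance\<close>

lemma powr_increment_mono:
  fixes d \<rho> s A :: real
  assumes "1 \<le> \<rho>" "0 \<le> s" "s \<le> A" "0 \<le> d"
  shows "(s + d) powr \<rho> - s powr \<rho> \<le> (A + d) powr \<rho> - A powr \<rho>"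
proof (rule DERIV_nonneg_imp_increasing_open[OF assms(3)])
  fix x assume x: "s < x" "x < A"
  hence xp: "0 < x" using assms by auto
  have "DERIV (\<lambda>x. (x + d) powr \<rho> - x powr \<rho>) x :> (\<rho> * (x + d) powr (\<rho> - 1) - \<rho> * x powr (\<rho> - 1))"
    using xp assms by (auto intro!: derivative_eq_intros)
  moreover have "x powr (\<rho> - 1) \<le> (x + d) powr (\<rho> - 1)"
    using xp assms by (intro powr_mono2) auto
  ultimately show "\<exists>y. DERIV (\<lambda>x. (x + d) powr \<rho> - x powr \<rho>) x :> y \<and> 0 \<le> y"
    using assms by (intro exI[of _ "\<rho> * (x + d) powr (\<rho> - 1) - \<rho> * x powr (\<rho> - 1)"]) auto
next
  show "continuous_on {s..A} (\<lambda>x. (x + d) powr \<rho> - x powr \<rho>)"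
    using assms by (intro continuous_intros continuous_on_powr') auto
qed

(* Changing one coordinate of a vector from s to t changes its l^rho norm by at most
   |t - s|; R stands for the rho-th powers of the other coordinates. *)
lemma lp_norm_one_coordinate:
  fixes R s t \<rho> :: real
  assumes r: "1 \<le> \<rho>" and R: "0 \<le> R" and s: "0 \<le> s" and t: "0 \<le> t"
  shows "(R + t powr \<rho>) powr (1/\<rho>) \<le> (R + s powr \<rho>) powr (1/\<rho>) + \<bar>t - s\<bar>"
proof (cases "t \<le> s")
  case True
  have "t powr \<rho> \<le> s powr \<rho>" using True r t by (intro powr_mono2) auto
  hence "(R + t powr \<rho>) powr (1/\<rho>) \<le> (R + s powr \<rho>) powr (1/\<rho>)"
    using r R t by (intro powr_mono2) auto
  thus ?thesis by simp
next
  case False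
  define A where "A = (R + s powr \<rho>) powr (1/\<rho>)"
  define d where "d = t - s"
  have d: "0 \<le> d" using False d_def by simp
  have A0: "0 \<le> A" unfolding A_def by simp
  have Ap: "A powr \<rho> = R + s powr \<rho>"
    unfolding A_def using r R by (simp add: powr_powr)
  have "s = (s powr \<rho>) powr (1/\<rho>)" using r s by (simp add: powr_powr)
  also have "\<dots> \<le> A" unfolding A_def using r R by (intro powr_mono2) auto
  finally have sA: "s \<le> A" .
  have "R + t powr \<rho> \<le> (A + d) powr \<rho>"
    using powr_increment_mono[OF r s sA d] Ap d_def by simp
  hence "(R + t powr \<rho>) powr (1/\<rho>) \<le> ((A + d) powr \<rho>) powr (1/\<rho>)"
    using r R t by (intro powr_mono2) auto
  also have "\<dots> = A + d" using r A0 d by (simp add: powr_powr)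
  finally show ?thesis using A_def d_def False by simp
qed

(* ||a||_rho <= ||b||_rho + ||a - b||_1, obtained by replacing the coordinates of b by
   those of a one at a time. *)
lemma lp_norm_l1_perturbation:
  fixes a b :: "'i \<Rightarrow> real"
  assumes I: "finite I" and r: "1 \<le> \<rho>"
  shows "(\<Sum>i\<in>I. \<bar>a i\<bar> powr \<rho>) powr (1/\<rho>)
           \<le> (\<Sum>i\<in>I. \<bar>b i\<bar> powr \<rho>) powr (1/\<rho>) + (\<Sum>i\<in>I. \<bar>a i - b i\<bar>)"
proof -
  define h where "h J i = (if i \<in> J then a i else b i)" for J i
  have "(\<Sum>i\<in>I. \<bar>h J i\<bar> powr \<rho>) powr (1/\<rho>)
          \<le> (\<Sum>i\<in>I. \<bar>b i\<bar> powr \<rho>) powr (1/\<rho>) + (\<Sum>i\<in>J. \<bar>a i - b i\<bar>)"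
    if "J \<subseteq> I" for J
  proof -
    have "finite J" using that I finite_subset by blast
    thus ?thesis using that
    proof (induction J rule: finite_induct)
      case empty
      then show ?case by (simp add: h_def)
    next
      case (insert j J)
      have jI: "j \<in> I" using insert by auto
      define Rj where "Rj = (\<Sum>i\<in>I-{j}. \<bar>h J i\<bar> powr \<rho>)"
      have old: "(\<Sum>i\<in>I. \<bar>h J i\<bar> powr \<rho>) = \<bar>b j\<bar> powr \<rho> + Rj"
        unfolding Rj_def using sum.remove[OF I jI, of "\<lambda>i. \<bar>h J i\<bar> powr \<rho>"] insert
        by (simp add: h_def)
      have "(\<Sum>i\<in>I-{j}. \<bar>h (insert j J) i\<bar> powr \<rho>) = Rj"
        unfolding Rj_def by (intro sum.cong) (auto simp: h_def)
      hence new: "(\<Sum>i\<in>I. \<bar>h (insert j J) i\<bar> powr \<rho>) = \<bar>a j\<bar> powr \<rho> + Rj"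
        using sum.remove[OF I jI, of "\<lambda>i. \<bar>h (insert j J) i\<bar> powr \<rho>"] by (simp add: h_def)
      have R0: "0 \<le> Rj" unfolding Rj_def by (intro sum_nonneg) auto
      have "(\<Sum>i\<in>I. \<bar>h (insert j J) i\<bar> powr \<rho>) powr (1/\<rho>)
              \<le> (\<Sum>i\<in>I. \<bar>h J i\<bar> powr \<rho>) powr (1/\<rho>) + \<bar>\<bar>a j\<bar> - \<bar>b j\<bar>\<bar>"
        using lp_norm_one_coordinate[OF r R0, of "\<bar>b j\<bar>" "\<bar>a j\<bar>"] old new
        by (simp add: add.commute)
      also have "\<bar>\<bar>a j\<bar> - \<bar>b j\<bar>\<bar> \<le> \<bar>a j - b j\<bar>" by simp
      finally show ?case using insert by simp
    qed
  qed
  from this[of I] show ?thesis by (simp add: h_def)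
qed

section \<open>Finite variation of a sequence over a symmetric window\<close>

definition window_var :: "nat \<Rightarrow> (int \<Rightarrow> real) \<Rightarrow> real" where
  "window_var N h = (\<Sum>m\<in>{- int N..int N}. \<bar>h (m + 1) - h m\<bar>)"

lemma window_var_nonneg: "0 \<le> window_var N h"
  unfolding window_var_def by (intro sum_nonneg) auto

lemma window_var_add: "window_var N (\<lambda>m. h1 m + h2 m) \<le> window_var N h1 + window_var N h2"
  unfolding window_var_def sum.distrib[symmetric] by (intro sum_mono) auto

lemma window_var_diff: "window_var N (\<lambda>m. h1 m - h2 m) \<le> window_var N h1 + window_var N h2"
  unfolding window_var_def sum.distrib[symmetric] by (intro sum_mono) auto

lemma window_var_cmult: "window_var N (\<lambda>m. c * h m) = \<bar>c\<bar> * window_var N h"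
  unfolding window_var_def sum_distrib_left
  by (intro sum.cong) (auto simp: abs_mult[symmetric] algebra_simps)

lemma telescope_int_interval:
  fixes f :: "int \<Rightarrow> real"
  shows "(\<Sum>m\<in>{a..a + int k - 1}. f (m + 1) - f m) = f (a + int k) - f a"
proof (induction k)
  case 0 then show ?case by simp
next
  case (Suc k)
  have "{a..a + int (Suc k) - 1} = insert (a + int k) {a..a + int k - 1}" by auto
  then show ?case using Suc by (simp add: algebra_simps)
qed

lemma window_var_monotone:
  assumes "\<And>m. h m \<le> h (m + 1)" "\<And>m. lo \<le> h m" "\<And>m. h m \<le> hi"
  shows "window_var N h \<le> hi - lo"
proof -
  have "window_var N h = (\<Sum>m\<in>{- int N..int N}. h (m + 1) - h m)"
    unfolding window_var_def using assms(1) by (intro sum.cong) auto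
  also have "\<dots> = h (int N + 1) - h (- int N)"
    using telescope_int_interval[of h "- int N" "2 * N + 1"] by (simp add: algebra_simps)
  also have "\<dots> \<le> hi - lo" using assms(2,3) by (intro diff_mono)
  finally show ?thesis .
qed

lemma window_var_lipschitz_comp:
  assumes "\<And>m. c m \<le> c (m + 1)" "\<And>m. \<alpha> \<le> c m" "\<And>m. c m \<le> \<beta>"
    and lip: "\<And>s t. \<alpha> \<le> s \<Longrightarrow> s \<le> \<beta> \<Longrightarrow> \<alpha> \<le> t \<Longrightarrow> t \<le> \<beta> \<Longrightarrow> \<bar>G s - G t\<bar> \<le> L * \<bar>s - t\<bar>"
    and L: "0 \<le> L"
  shows "window_var N (\<lambda>m. G (c m)) \<le> L * (\<beta> - \<alpha>)"
proof -
  have "window_var N (\<lambda>m. G (c m)) \<le> (\<Sum>m\<in>{- int N..int N}. L * \<bar>c (m + 1) - c m\<bar>)"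
    unfolding window_var_def using assms by (intro sum_mono lip) auto
  also have "\<dots> = L * window_var N c" unfolding window_var_def by (simp add: sum_distrib_left)
  also have "\<dots> \<le> L * (\<beta> - \<alpha>)" using assms by (intro mult_left_mono window_var_monotone) auto
  finally show ?thesis .
qed

lemma mvt_lipschitz_bound:
  fixes f f' :: "real \<Rightarrow> real"
  assumes der: "\<And>t. min a b \<le> t \<Longrightarrow> t \<le> max a b \<Longrightarrow> (f has_real_derivative f' t) (at t)"
    and bd: "\<And>t. min a b \<le> t \<Longrightarrow> t \<le> max a b \<Longrightarrow> \<bar>f' t\<bar> \<le> B"
  shows "\<bar>f b - f a\<bar> \<le> B * \<bar>b - a\<bar>"
proof (cases a b rule: linorder_cases)
  case less
  then obtain z where z: "a < z" "z < b" "f b - f a = (b - a) * f' z"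
    using MVT2[OF less, of f f'] der by auto
  have "\<bar>f' z\<bar> \<le> B" using z less by (intro bd) auto
  then show ?thesis using z less by (simp add: abs_mult mult.commute mult_left_mono)
next
  case equal then show ?thesis by simp
next
  case greater
  then obtain z where z: "b < z" "z < a" "f a - f b = (a - b) * f' z"
    using MVT2[OF greater, of f f'] der by auto
  have "\<bar>f' z\<bar> \<le> B" using z greater by (intro bd) auto
  then show ?thesis
    using z greater by (simp add: abs_mult mult.commute mult_left_mono abs_minus_commute)
qed

lemma sum_abs_coordinates_le:
  fixes w :: "'a::euclidean_space"
  shows "(\<Sum>i\<in>Basis. \<bar>w \<bullet> i\<bar>) \<le> real DIM('a) * norm w"
proof -
  have "(\<Sum>i\<in>Basis. \<bar>w \<bullet> i\<bar>) \<le> (\<Sum>i\<in>(Basis::'a set). norm w)"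
    by (intro sum_mono Basis_le_norm)
  then show ?thesis by simp
qed

lemma coordinate_path_far:
  fixes u v :: "'a::euclidean_space"
  assumes close: "real DIM('a) * norm (v - u) \<le> norm u / 2"
    and S: "S \<subseteq> Basis" and j: "j \<in> Basis" "j \<notin> S" and t: "\<bar>t\<bar> \<le> \<bar>(v - u) \<bullet> j\<bar>"
  shows "norm u / 2 \<le> norm (u + (\<Sum>i\<in>S. ((v - u) \<bullet> i) *\<^sub>R i) + t *\<^sub>R j)"
proof -
  let ?p = "u + (\<Sum>i\<in>S. ((v - u) \<bullet> i) *\<^sub>R i) + t *\<^sub>R j"
  have "?p - u = (\<Sum>i\<in>S. ((v - u) \<bullet> i) *\<^sub>R i) + t *\<^sub>R j" by simp
  hence "norm (?p - u) \<le> norm (\<Sum>i\<in>S. ((v - u) \<bullet> i) *\<^sub>R i) + norm (t *\<^sub>R j)"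
    by (metis norm_triangle_ineq)
  also have "\<dots> \<le> (\<Sum>i\<in>S. \<bar>(v - u) \<bullet> i\<bar>) + \<bar>(v - u) \<bullet> j\<bar>"
    using S j t by (intro add_mono order.trans[OF norm_sum] sum_mono) (auto simp: subset_iff)
  also have "\<dots> = (\<Sum>i\<in>insert j S. \<bar>(v - u) \<bullet> i\<bar>)"
    using j finite_subset[OF S] by simp
  also have "\<dots> \<le> (\<Sum>i\<in>Basis. \<bar>(v - u) \<bullet> i\<bar>)"
    using S j by (intro sum_mono2) auto
  also have "\<dots> \<le> norm u / 2" using sum_abs_coordinates_le[of "v - u"] close by linarith
  finally have "norm (?p - u) \<le> norm u / 2" .
  moreover have "norm u \<le> norm ?p + norm (?p - u)"
    using norm_triangle_ineq4[of ?p "?p - u"] by simp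
  ultimately show ?thesis by simp
qed

lemma norm_comparable_far:
  fixes u v :: "'a::euclidean_space"
  assumes r: "0 < r" and far: "4 * real DIM('a) * r < norm u" and uv: "norm (u - v) \<le> 2 * r"
  shows "norm u - 2 * r \<le> norm v" "norm v \<le> norm u + 2 * r"
    and "norm u / 2 \<le> norm v" "norm v \<le> 2 * norm u"
proof -
  have "\<bar>norm u - norm v\<bar> \<le> 2 * r" using norm_triangle_ineq3[of u v] uv by linarith
  thus uv1: "norm u - 2 * r \<le> norm v" and uv2: "norm v \<le> norm u + 2 * r" by auto
  have "4 * r \<le> 4 * real DIM('a) * r" using r by simp
  thus "norm u / 2 \<le> norm v" "norm v \<le> 2 * norm u" using uv1 uv2 far by linarith+
qed

section \<open>The dyadic decay integral\<close>

(* Pointwise dyadic splitting of r / d^(n+1) for d > r: the first K annuli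
   2^k r <= d < 2^(k+1) r contribute their maximal value, the rest is bounded by the
   value at 2^K r.  The auxiliary form keeps the exact tail for the induction. *)
lemma dyadic_decay_aux:
  fixes r d :: real
  assumes r: "0 < r" and d: "r < d"
  shows "r / d^(n+1) \<le> (\<Sum>k<K. r / (2^k*r)^(n+1) * indicator {..<2^(k+1)*r} d)
            + (if 2^K*r \<le> d then r / d^(n+1) else 0)"
proof (induction K)
  case 0
  then show ?case using d by simp
next
  case (Suc K)
  have d0: "0 < d" using r d by simp
  show ?case
  proof (cases "2^K*r \<le> d")
    case True
    show ?thesis
    proof (cases "d < 2^(K+1)*r")
      case True2: True
      have "r / d^(n+1) \<le> r / (2^K*r)^(n+1)"
        using True r d0 by (intro divide_left_mono power_mono mult_pos_pos zero_less_power) auto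
      hence "(if 2^K*r \<le> d then r / d^(n+1) else 0) \<le> r / (2^K*r)^(n+1) * indicator {..<2^(K+1)*r} d
               + (if 2^(Suc K)*r \<le> d then r / d^(n+1) else 0)"
        using True True2 by simp
      then show ?thesis using Suc by simp
    next
      case False
      hence "(if 2^K*r \<le> d then r / d^(n+1) else 0) \<le> r / (2^K*r)^(n+1) * indicator {..<2^(K+1)*r} d
               + (if 2^(Suc K)*r \<le> d then r / d^(n+1) else 0)"
        using True by simp
      then show ?thesis using Suc by simp
    qed
  next
    case False
    have "2^K*r \<le> 2^(Suc K)*r" using r by simp
    hence "\<not> 2^(Suc K)*r \<le> d" using False by linarith
    hence "(if 2^K*r \<le> d then r / d^(n+1) else 0) \<le> r / (2^K*r)^(n+1) * indicator {..<2^(K+1)*r} d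
               + (if 2^(Suc K)*r \<le> d then r / d^(n+1) else 0)"
      using False r by (simp add: indicator_def)
    then show ?thesis using Suc by simp
  qed
qed

lemma dyadic_decay:
  fixes r d :: real
  assumes r: "0 < r" and d: "r < d"
  shows "r / d^(n+1) \<le> (\<Sum>k<K. r / (2^k*r)^(n+1) * indicator {..<2^(k+1)*r} d) + r / (2^K*r)^(n+1)"
proof -
  have "r / d^(n+1) \<le> r / (2^K*r)^(n+1)" if "2^K*r \<le> d"
  proof -
    have "0 < 2^K*r" using r by simp
    thus ?thesis using that r d by (intro divide_left_mono power_mono mult_pos_pos zero_less_power) auto
  qed
  hence "(if 2^K*r \<le> d then r / d^(n+1) else 0) \<le> r / (2^K*r)^(n+1)"
    using r by auto
  thus ?thesis using dyadic_decay_aux[OF r d, of n K] by linarith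
qed

(* Weight of the k-th annulus against the growth bound (2^(k+1) r)^n of the measure. *)
lemma dyadic_shell_weight:
  fixes r :: real assumes r: "0 < r"
  shows "r / (2^k*r)^(n+1) * (2^(k+1)*r)^n = 2^n * (1/2)^k"
  using r by (simp add: power_mult_distrib power_add field_simps flip: power_mult)

lemma decay_integral_dyadic:
  fixes \<nu> :: "'a::euclidean_space measure"
  assumes fm: "finite_measure \<nu>" and sb: "sets \<nu> = sets borel" and r: "0 < r"
    and Sd: "\<And>y. y \<in> S \<Longrightarrow> r < dist x y"
  shows "(\<integral>y. indicator S y * (r / norm (x - y)^(n+1)) \<partial>\<nu>)
     \<le> (\<Sum>k<K. r/(2^k*r)^(n+1) * measure \<nu> (ball x (2^(k+1)*r))) + r/(2^K*r)^(n+1) * measure \<nu> UNIV"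
proof -
  interpret finite_measure \<nu> by (rule fm)
  have sp: "space \<nu> = UNIV" using sets_eq_imp_space_eq[OF sb] by simp
  have bs: "ball x R \<in> sets \<nu>" for R using sb by simp
  define h where "h y = (\<Sum>k<K. r/(2^k*r)^(n+1) * indicator (ball x (2^(k+1)*r)) y) + r/(2^K*r)^(n+1)" for y
  have hi: "integrable \<nu> h" unfolding h_def
    using bs by (intro Bochner_Integration.integrable_add Bochner_Integration.integrable_sum Bochner_Integration.integrable_mult_right integrable_real_indicator integrable_const) (auto simp: less_top[symmetric] emeasure_finite)
  have "(\<integral>y. indicator S y * (r / norm (x - y)^(n+1)) \<partial>\<nu>) \<le> (\<integral>y. h y \<partial>\<nu>)"
  proof (rule integral_mono'[OF hi])
    fix y assume "y \<in> space \<nu>"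
    show "0 \<le> h y" unfolding h_def using r by (intro add_nonneg_nonneg sum_nonneg) auto
    show "indicator S y * (r / norm (x - y)^(n+1)) \<le> h y"
    proof (cases "y \<in> S")
      case True
      have "r / norm (x - y)^(n+1) \<le> (\<Sum>k<K. r / (2^k*r)^(n+1) * indicator {..<2^(k+1)*r} (norm (x - y))) + r / (2^K*r)^(n+1)"
        using dyadic_decay[OF r, of "norm (x - y)"] Sd[OF True] by (simp add: dist_norm)
      also have "\<dots> = h y" unfolding h_def by (simp add: indicator_def dist_norm)
      finally show ?thesis using True by simp
    next
      case False
      thus ?thesis using \<open>0 \<le> h y\<close> by simp
    qed
  qed
  also have "(\<integral>y. h y \<partial>\<nu>) = (\<Sum>k<K. r/(2^k*r)^(n+1) * measure \<nu> (ball x (2^(k+1)*r))) + r/(2^K*r)^(n+1) * measure \<nu> UNIV"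
  proof -
    have i1: "integrable \<nu> (\<lambda>y. \<Sum>k<K. r/(2^k*r)^(n+1) * indicator (ball x (2^(k+1)*r)) y)"
      using bs by (intro Bochner_Integration.integrable_sum Bochner_Integration.integrable_mult_right integrable_real_indicator) (auto simp: less_top[symmetric] emeasure_finite)
    have "(\<integral>y. h y \<partial>\<nu>) = (\<integral>y. (\<Sum>k<K. r/(2^k*r)^(n+1) * indicator (ball x (2^(k+1)*r)) y) \<partial>\<nu>) + (\<integral>y. r/(2^K*r)^(n+1) \<partial>\<nu>)"
      unfolding h_def by (rule Bochner_Integration.integral_add[OF i1 integrable_const])
    also have "(\<integral>y. (\<Sum>k<K. r/(2^k*r)^(n+1) * indicator (ball x (2^(k+1)*r)) y) \<partial>\<nu>)
        = (\<Sum>k<K. (\<integral>y. r/(2^k*r)^(n+1) * indicator (ball x (2^(k+1)*r)) y \<partial>\<nu>))"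
      using bs by (intro Bochner_Integration.integral_sum Bochner_Integration.integrable_mult_right integrable_real_indicator) (auto simp: less_top[symmetric] emeasure_finite)
    also have "\<dots> = (\<Sum>k<K. r/(2^k*r)^(n+1) * measure \<nu> (ball x (2^(k+1)*r)))"
      using sp by simp
    also have "(\<integral>y. r/(2^K*r)^(n+1) \<partial>\<nu>) = r/(2^K*r)^(n+1) * measure \<nu> UNIV"
      using sp by (simp add: mult.commute)
    finally show ?thesis .
  qed
  finally show ?thesis .
qed

lemma geometric_half_sum: "(\<Sum>k<K. (1/2::real)^k) = 2 - 2 * (1/2)^K"
  by (induction K) auto

lemma decay_integral_truncated:
  fixes \<nu>1 \<nu>2 :: "'a::euclidean_space measure"
  assumes fm1: "finite_measure \<nu>1" and sb1: "sets \<nu>1 = sets borel"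
    and fm2: "finite_measure \<nu>2" and sb2: "sets \<nu>2 = sets borel" and r: "0 < r"
    and Sd: "\<And>y. y \<in> S \<Longrightarrow> r < dist x y"
    and MC: "0 \<le> MC"
    and Mb: "\<And>R. 0 < R \<Longrightarrow> measure \<nu>1 (ball x R) + measure \<nu>2 (ball x R) \<le> MC * R^n"
  shows "(\<integral>y. indicator S y * (r / norm (x - y)^(n+1)) \<partial>\<nu>1)
           + (\<integral>y. indicator S y * (r / norm (x - y)^(n+1)) \<partial>\<nu>2)
     \<le> 2^(n+1) * MC + (1/2)^K * ((measure \<nu>1 UNIV + measure \<nu>2 UNIV) / r^n)"
proof -
  define T where "T = measure \<nu>1 UNIV + measure \<nu>2 UNIV"
  define c where "c k = r/(2^k*r)^(n+1)" for k :: nat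
  have T0: "0 \<le> T" unfolding T_def by simp
  have c0: "0 \<le> c k" for k unfolding c_def using r by simp
  have "(\<integral>y. indicator S y * (r / norm (x - y)^(n+1)) \<partial>\<nu>1)
          + (\<integral>y. indicator S y * (r / norm (x - y)^(n+1)) \<partial>\<nu>2)
      \<le> ((\<Sum>k<K. c k * measure \<nu>1 (ball x (2^(k+1)*r))) + c K * measure \<nu>1 UNIV)
            + ((\<Sum>k<K. c k * measure \<nu>2 (ball x (2^(k+1)*r))) + c K * measure \<nu>2 UNIV)"
    unfolding c_def
    by (intro add_mono decay_integral_dyadic[OF fm1 sb1 r Sd] decay_integral_dyadic[OF fm2 sb2 r Sd])
  also have "\<dots> = (\<Sum>k<K. c k * (measure \<nu>1 (ball x (2^(k+1)*r)) + measure \<nu>2 (ball x (2^(k+1)*r))))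
                    + c K * T"
    unfolding T_def by (simp add: sum.distrib algebra_simps)
  also have "\<dots> \<le> (\<Sum>k<K. c k * (MC * (2^(k+1)*r)^n)) + c K * T"
    using c0 r by (intro add_mono sum_mono mult_left_mono Mb) auto
  also have "(\<Sum>k<K. c k * (MC * (2^(k+1)*r)^n)) = MC * 2^n * (\<Sum>k<K. (1/2)^k)"
    unfolding c_def sum_distrib_left
    by (intro sum.cong refl) (metis (no_types) dyadic_shell_weight[OF r] mult.assoc mult.commute)
  also have "\<dots> \<le> 2^(n+1) * MC" unfolding geometric_half_sum using MC by (simp add: algebra_simps)
  also have "c K * T \<le> (1/2)^K * (T / r^n)"
  proof -
    have "(2::real)^K \<le> (2^K)^(n+1)" by (intro self_le_power) auto
    hence "2^K * r^(n+1) \<le> (2^K * r)^(n+1)" using r by (simp add: power_mult_distrib)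
    hence "c K \<le> r / (2^K * r^(n+1))" unfolding c_def using r
      by (intro divide_left_mono mult_pos_pos) auto
    also have "\<dots> = (1/2)^K / r^n" using r by (simp add: power_divide field_simps)
    finally have "c K \<le> (1/2)^K / r^n" .
    hence "c K * T \<le> (1/2)^K / r^n * T" using T0 by (rule mult_right_mono)
    thus ?thesis by simp
  qed
  finally show ?thesis unfolding T_def by simp
qed

(* Letting K tend to infinity removes the tail. *)
lemma decay_integral_bound:
  fixes \<nu>1 \<nu>2 :: "'a::euclidean_space measure"
  assumes fm1: "finite_measure \<nu>1" and sb1: "sets \<nu>1 = sets borel"
    and fm2: "finite_measure \<nu>2" and sb2: "sets \<nu>2 = sets borel" and r: "0 < r"
    and Sd: "\<And>y. y \<in> S \<Longrightarrow> r < dist x y"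
    and MC: "0 \<le> MC"
    and Mb: "\<And>R. 0 < R \<Longrightarrow> measure \<nu>1 (ball x R) + measure \<nu>2 (ball x R) \<le> MC * R^n"
  shows "(\<integral>y. indicator S y * (r / norm (x - y)^(n+1)) \<partial>\<nu>1)
           + (\<integral>y. indicator S y * (r / norm (x - y)^(n+1)) \<partial>\<nu>2) \<le> 2^(n+1) * MC"
proof (rule LIMSEQ_le_const2)
  let ?T = "(measure \<nu>1 UNIV + measure \<nu>2 UNIV) / r^n"
  show "(\<lambda>K. (\<integral>y. indicator S y * (r / norm (x - y)^(n+1)) \<partial>\<nu>1)
           + (\<integral>y. indicator S y * (r / norm (x - y)^(n+1)) \<partial>\<nu>2) - (1/2)^K * ?T)
        \<longlonglongrightarrow> (\<integral>y. indicator S y * (r / norm (x - y)^(n+1)) \<partial>\<nu>1)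
           + (\<integral>y. indicator S y * (r / norm (x - y)^(n+1)) \<partial>\<nu>2)"
    using r by (auto intro!: tendsto_eq_intros LIMSEQ_power_zero)
  show "\<exists>N. \<forall>K\<ge>N. (\<integral>y. indicator S y * (r / norm (x - y)^(n+1)) \<partial>\<nu>1)
           + (\<integral>y. indicator S y * (r / norm (x - y)^(n+1)) \<partial>\<nu>2) - (1/2)^K * ?T \<le> 2^(n+1) * MC"
    using decay_integral_truncated[OF assms] by (intro exI[of _ 0] allI impI) (simp add: algebra_simps)
qed

section \<open>Reduction of the rho-variation estimate to an l^1 bound\<close>

(* rho_variation is a supremum over a nonempty family of nonnegative reals. *)
lemma rho_variation_nonneg: "0 \<le> rho_variation \<rho> F"
proof -
  define e0 where "e0 = (\<lambda>m::int. exp (- real_of_int m))"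
  have mem: "(e0, 0::nat) \<in> {(e :: int \<Rightarrow> real, N :: nat). (\<forall>m. 0 < e m) \<and> (\<forall>m. e (m + 1) < e m)}"
    unfolding e0_def by auto
  have "(0::ereal) \<le> ereal ((\<Sum>m\<in>{- int (snd (e0, 0::nat))..int (snd (e0, 0::nat))}.
                  \<bar>F (fst (e0, 0::nat) (m + 1)) - F (fst (e0, 0::nat) m)\<bar> powr \<rho>) powr (1 / \<rho>))"
    by simp
  also have "\<dots> \<le> rho_variation \<rho> F" unfolding rho_variation_def
    by (rule SUP_upper[OF mem])
  finally show ?thesis .
qed

lemma rho_variation_perturbation:
  assumes r: "1 \<le> \<rho>"
    and close: "\<And>e N. (\<forall>m. 0 < e m) \<Longrightarrow> (\<forall>m. e (m + 1) < e m) \<Longrightarrow>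
      (\<Sum>m\<in>{- int N..int N}. \<bar>(Fx (e (m + 1)) - Fx (e m)) - (Fz (e (m + 1)) - Fz (e m))\<bar>) \<le> c"
  shows "rho_variation \<rho> Fx \<le> rho_variation \<rho> Fz + ereal c"
  unfolding rho_variation_def
proof (rule SUP_least, clarify)
  fix e :: "int \<Rightarrow> real" and N :: nat
  assume e: "\<forall>m. 0 < e m" "\<forall>m. e (m + 1) < e m"
  have "(\<Sum>m\<in>{- int N..int N}. \<bar>Fx (e (m + 1)) - Fx (e m)\<bar> powr \<rho>) powr (1 / \<rho>)
      \<le> (\<Sum>m\<in>{- int N..int N}. \<bar>Fz (e (m + 1)) - Fz (e m)\<bar> powr \<rho>) powr (1 / \<rho>) + c"
    using lp_norm_l1_perturbation[OF finite_atLeastAtMost_int[of "- int N" "int N"] r,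
        where a = "\<lambda>m. Fx (e (m + 1)) - Fx (e m)" and b = "\<lambda>m. Fz (e (m + 1)) - Fz (e m)"]
      close[OF e, of N]
    by linarith
  hence "ereal ((\<Sum>m\<in>{- int N..int N}. \<bar>Fx (e (m + 1)) - Fx (e m)\<bar> powr \<rho>) powr (1 / \<rho>))
      \<le> ereal ((\<Sum>m\<in>{- int N..int N}. \<bar>Fz (e (m + 1)) - Fz (e m)\<bar> powr \<rho>) powr (1 / \<rho>)) + ereal c"
    by simp
  also have "\<dots> \<le> (SUP p\<in>{(e :: int \<Rightarrow> real, N :: nat). (\<forall>m. 0 < e m) \<and> (\<forall>m. e (m + 1) < e m)}.
        ereal ((\<Sum>m\<in>{- int (snd p)..int (snd p)}. \<bar>Fz (fst p (m + 1)) - Fz (fst p m)\<bar> powr \<rho>) powr (1 / \<rho>)))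
        + ereal c"
    using e by (intro add_right_mono SUP_upper2[of "(e, N)"]) auto
  finally show "ereal ((\<Sum>m\<in>{- int (snd (e, N))..int (snd (e, N))}.
        \<bar>Fx (fst (e, N) (m + 1)) - Fx (fst (e, N) m)\<bar> powr \<rho>) powr (1 / \<rho>))
     \<le> (SUP p\<in>{(e :: int \<Rightarrow> real, N :: nat). (\<forall>m. 0 < e m) \<and> (\<forall>m. e (m + 1) < e m)}.
        ereal ((\<Sum>m\<in>{- int (snd p)..int (snd p)}. \<bar>Fz (fst p (m + 1)) - Fz (fst p m)\<bar> powr \<rho>) powr (1 / \<rho>)))
        + ereal c" by simp
qed

section \<open>AD regularity and the maximal function\<close>

lemma AD_regular_ball_measure:
  assumes ad: "AD_regular n C0 \<mu>" and x: "x \<in> supp_meas \<mu>" and R: "0 < R"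
  shows "0 < measure \<mu> (ball x R)" and "measure \<mu> (ball x R) \<le> C0 * R ^ n"
proof -
  have C0: "0 < C0"
    and lo: "ennreal (R ^ n / C0) \<le> emeasure \<mu> (ball x R)"
    and up: "emeasure \<mu> (ball x R) \<le> ennreal (C0 * R ^ n)"
    using ad x R unfolding AD_regular_def by auto
  have "emeasure \<mu> (ball x R) \<noteq> top" using up ennreal_less_top by (metis top.not_eq_extremum leD)
  hence eq: "emeasure \<mu> (ball x R) = ennreal (measure \<mu> (ball x R))"
    by (rule emeasure_eq_ennreal_measure)
  have "R ^ n / C0 \<le> measure \<mu> (ball x R)" using lo unfolding eq by (simp add: ennreal_le_iff)
  moreover have "0 < R ^ n / C0" using C0 R by simp
  ultimately show "0 < measure \<mu> (ball x R)" by linarith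
  show "measure \<mu> (ball x R) \<le> C0 * R ^ n" using up C0 R unfolding eq
    by (subst (asm) ennreal_le_iff) auto
qed

lemma max_mu_nonneg: "0 \<le> max_mu \<mu> \<nu>1 \<nu>2 x"
proof -
  have "ereal 0 \<le> ereal ((measure \<nu>1 (ball x 1) + measure \<nu>2 (ball x 1)) / measure \<mu> (ball x 1))"
    by simp
  also have "\<dots> \<le> max_mu \<mu> \<nu>1 \<nu>2 x" unfolding max_mu_def by (intro SUP_upper) auto
  finally show ?thesis by (simp add: zero_ereal_def)
qed

lemma max_mu_growth:
  assumes ad: "AD_regular n C0 \<mu>" and x: "x \<in> supp_meas \<mu>"
    and M: "max_mu \<mu> \<nu>1 \<nu>2 x = ereal M" and R: "0 < R"
  shows "measure \<nu>1 (ball x R) + measure \<nu>2 (ball x R) \<le> (M * C0) * R ^ n"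
proof -
  have "ereal ((measure \<nu>1 (ball x R) + measure \<nu>2 (ball x R)) / measure \<mu> (ball x R)) \<le> ereal M"
    unfolding M[symmetric] max_mu_def using R by (intro SUP_upper) auto
  hence "measure \<nu>1 (ball x R) + measure \<nu>2 (ball x R) \<le> M * measure \<mu> (ball x R)"
    using AD_regular_ball_measure(1)[OF ad x R] by (simp add: divide_le_eq mult.commute)
  also have "\<dots> \<le> M * (C0 * R ^ n)"
    using AD_regular_ball_measure(2)[OF ad x R] max_mu_nonneg[of \<mu> \<nu>1 \<nu>2 x] M
    by (intro mult_left_mono) auto
  finally show ?thesis by (simp add: mult.assoc)
qed

definition trunc_kernel :: "(real \<Rightarrow> real) \<Rightarrow> ('a::euclidean_space \<Rightarrow> real) \<Rightarrow> real \<Rightarrow> 'a \<Rightarrow> real" where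
  "trunc_kernel \<phi> K \<epsilon> w = phi_eps \<phi> \<epsilon> w * K w"

lemma borel_measurable_reflect:
  fixes g :: "'a::euclidean_space \<Rightarrow> real"
  assumes c: "continuous_on UNIV g" and sb: "sets \<nu> = sets borel"
  shows "(\<lambda>y. g (w - y)) \<in> borel_measurable \<nu>"
proof -
  have "continuous_on UNIV (\<lambda>y. g (w - y))"
    by (rule continuous_on_compose2[OF c]) (auto intro!: continuous_intros)
  hence "(\<lambda>y. g (w - y)) \<in> borel_measurable borel" by (rule borel_measurable_continuous_onI)
  thus ?thesis using sb by (simp add: measurable_cong_sets[OF sb refl])
qed

lemma T_phi_restricted:
  fixes \<nu>1 \<nu>2 :: "'a::euclidean_space measure"
  assumes sb1: "sets \<nu>1 = sets borel" and sb2: "sets \<nu>2 = sets borel" and S: "S \<in> sets borel"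
    and c: "continuous_on UNIV (trunc_kernel \<phi> K \<epsilon>)"
  shows "T_phi \<phi> K (density \<nu>1 (\<lambda>y. indicator S y :: ennreal))
                    (density \<nu>2 (\<lambda>y. indicator S y :: ennreal)) \<epsilon> w
     = (\<integral>y. indicator S y * trunc_kernel \<phi> K \<epsilon> (w - y) \<partial>\<nu>1)
       - (\<integral>y. indicator S y * trunc_kernel \<phi> K \<epsilon> (w - y) \<partial>\<nu>2)"
proof -
  have restrict: "(\<integral>y. phi_eps \<phi> \<epsilon> (w - y) * K (w - y) \<partial>(density \<nu> (\<lambda>y. indicator S y :: ennreal)))
        = (\<integral>y. indicator S y * trunc_kernel \<phi> K \<epsilon> (w - y) \<partial>\<nu>)"
    if sb: "sets \<nu> = sets borel" for \<nu> :: "'a measure"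
  proof -
    have d: "density \<nu> (\<lambda>y. indicator S y :: ennreal) = density \<nu> (\<lambda>y. ennreal (indicator S y))"
      by (simp add: ennreal_indicator)
    have Sm: "S \<in> sets \<nu>" using S sb by simp
    have "(\<integral>y. trunc_kernel \<phi> K \<epsilon> (w - y) \<partial>(density \<nu> (\<lambda>y. ennreal (indicator S y))))
          = (\<integral>y. indicator S y *\<^sub>R trunc_kernel \<phi> K \<epsilon> (w - y) \<partial>\<nu>)"
      by (rule integral_density[OF borel_measurable_reflect[OF c sb]]) (use Sm in auto)
    thus ?thesis unfolding d trunc_kernel_def by simp
  qed
  show ?thesis unfolding T_phi_def restrict[OF sb1] restrict[OF sb2] ..
qed

lemma dist_to_complement_double_ball:
  assumes "w \<in> ball xB r" "y \<in> - ball xB (2*r)"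
  shows "r < dist w y"
proof -
  have "dist xB w < r" "2*r \<le> dist xB y" using assms by auto
  moreover have "dist xB y \<le> dist xB w + dist w y" by (rule dist_triangle)
  ultimately show ?thesis by linarith
qed

lemma integrable_decay_profile:
  fixes \<nu> :: "'a::euclidean_space measure"
  assumes fm: "finite_measure \<nu>" and sb: "sets \<nu> = sets borel" and r: "0 < r"
    and S: "S \<in> sets borel" and Sd: "\<And>y. y \<in> S \<Longrightarrow> r < dist x y"
  shows "integrable \<nu> (\<lambda>y. indicator S y * (r / norm (x - y)^(m+1)))"
proof -
  interpret finite_measure \<nu> by (rule fm)
  show ?thesis
  proof (rule integrable_const_bound[where B = "r / r^(m+1)"])
    show "AE y in \<nu>. norm (indicator S y * (r / norm (x - y)^(m+1))) \<le> r / r^(m+1)"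
    proof (intro AE_I2)
      fix y
      show "norm (indicator S y * (r / norm (x - y)^(m+1))) \<le> r / r^(m+1)"
      proof (cases "y \<in> S")
        case True
        have d: "r < norm (x - y)" using Sd[OF True] by (simp add: dist_norm)
        have "r / norm (x - y)^(m+1) \<le> r / r^(m+1)" using d r
          by (intro divide_left_mono power_mono mult_pos_pos zero_less_power) auto
        thus ?thesis using True r d by simp
      qed (use r in simp)
    qed
    have "(\<lambda>y. indicator S y * (r / norm (x - y)^(m+1))) \<in> borel_measurable borel"
      using S by measurable
    thus "(\<lambda>y. indicator S y * (r / norm (x - y)^(m+1))) \<in> borel_measurable \<nu>"
      by (simp add: measurable_cong_sets[OF sb refl])
  qed
qed

locale kernel_profile =
  fixes K :: "'a::euclidean_space \<Rightarrow> real" and \<phi> \<phi>1 :: "real \<Rightarrow> real"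
    and D1 :: "'a \<Rightarrow> 'a \<Rightarrow> real" and CK P1 P2 :: real and n :: nat
  assumes Kb: "\<And>x. x \<noteq> 0 \<Longrightarrow> \<bar>K x\<bar> \<le> CK / norm x ^ n"
    and der: "\<And>x i. x \<noteq> 0 \<Longrightarrow> i \<in> Basis \<Longrightarrow> ((\<lambda>t. K (x + t *\<^sub>R i)) has_real_derivative D1 i x) (at 0)"
    and bnd: "\<And>x i. x \<noteq> 0 \<Longrightarrow> i \<in> Basis \<Longrightarrow> \<bar>D1 i x\<bar> \<le> CK / norm x ^ (n+1)"
    and CK: "0 \<le> CK"
    and rng: "\<And>t. 0 \<le> t \<Longrightarrow> 0 \<le> \<phi> t \<and> \<phi> t \<le> 1"
    and z0: "\<And>t. 0 \<le> t \<Longrightarrow> t < 1/4 \<Longrightarrow> \<phi> t = 0"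
    and one: "\<And>t. 4 \<le> t \<Longrightarrow> \<phi> t = 1"
    and mono: "\<And>s t. 0 \<le> s \<Longrightarrow> s \<le> t \<Longrightarrow> \<phi> s \<le> \<phi> t"
    and dphi: "\<And>t. 0 < t \<Longrightarrow> (\<phi> has_real_derivative \<phi>1 t) (at t)"
    and P1: "\<And>t. 0 \<le> t \<Longrightarrow> t \<le> 16 \<Longrightarrow> \<bar>\<phi>1 t\<bar> \<le> P1"
    and P2: "\<And>s t. 0 < s \<Longrightarrow> s \<le> 16 \<Longrightarrow> 0 < t \<Longrightarrow> t \<le> 16 \<Longrightarrow> \<bar>\<phi>1 s - \<phi>1 t\<bar> \<le> P2 * \<bar>s - t\<bar>"
    and P10: "0 \<le> P1" and P20: "0 \<le> P2"
begin

(* K is Lipschitz with constant ~ CK |u|^-(n+1) near u: integrate the partial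
   derivatives along the coordinate path from u to v. *)
lemma kernel_lipschitz_far:
  assumes u: "u \<noteq> 0" and close: "real DIM('a) * norm (v - u) \<le> norm u / 2"
  shows "\<bar>K v - K u\<bar> \<le> CK * (2 / norm u)^(n+1) * (real DIM('a) * norm (v - u))"
proof -
  define p where "p S = u + (\<Sum>i\<in>S. ((v-u) \<bullet> i) *\<^sub>R i)" for S
  define Lb where "Lb = CK * (2 / norm u)^(n+1)"
  have Lb0: "0 \<le> Lb" unfolding Lb_def using CK by simp
  have nu: "0 < norm u" using u by simp
  have "\<bar>K (p S) - K u\<bar> \<le> Lb * (\<Sum>i\<in>S. \<bar>(v-u) \<bullet> i\<bar>)" if "S \<subseteq> Basis" for S
  proof -
    have "finite S" using finite_subset[OF that finite_Basis] .
    thus ?thesis using that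
    proof (induction S rule: finite_induct)
      case empty then show ?case by (simp add: p_def)
    next
      case (insert j S)
      define h where "h = (v-u) \<bullet> j"
      have pins: "p (insert j S) = p S + h *\<^sub>R j" unfolding p_def h_def using insert by simp
      have jB: "j \<in> Basis" and SB: "S \<subseteq> Basis" using insert by auto
      have "\<bar>K (p S + h *\<^sub>R j) - K (p S + 0 *\<^sub>R j)\<bar> \<le> Lb * \<bar>h - 0\<bar>"
      proof (rule mvt_lipschitz_bound[where f' = "\<lambda>t. D1 j (p S + t *\<^sub>R j)"])
        fix t assume t: "min 0 h \<le> t" "t \<le> max 0 h"
        hence tb: "\<bar>t\<bar> \<le> \<bar>(v-u) \<bullet> j\<bar>" unfolding h_def by auto
        have fa: "norm u / 2 \<le> norm (p S + t *\<^sub>R j)" unfolding p_def by (rule coordinate_path_far[OF close SB jB insert(2) tb])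
        hence np: "0 < norm (p S + t *\<^sub>R j)" using nu by linarith
        hence nz: "p S + t *\<^sub>R j \<noteq> 0" by auto
        have "((\<lambda>s. K (p S + t *\<^sub>R j + s *\<^sub>R j)) has_real_derivative D1 j (p S + t *\<^sub>R j)) (at 0)"
          using der[OF nz jB] .
        hence "((\<lambda>s. K (p S + (s + t) *\<^sub>R j)) has_real_derivative D1 j (p S + t *\<^sub>R j)) (at 0)"
          by (simp add: algebra_simps scaleR_add_left)
        thus "((\<lambda>s. K (p S + s *\<^sub>R j)) has_real_derivative D1 j (p S + t *\<^sub>R j)) (at t)"
          using DERIV_shift[of "\<lambda>s. K (p S + s *\<^sub>R j)" _ 0 t] by simp
        have "\<bar>D1 j (p S + t *\<^sub>R j)\<bar> \<le> CK / norm (p S + t *\<^sub>R j) ^ (n+1)" using bnd[OF nz jB] .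
        also have "\<dots> \<le> CK / (norm u / 2) ^ (n+1)"
          using fa nu CK np by (intro divide_left_mono power_mono mult_pos_pos zero_less_power) auto
        also have "\<dots> = Lb" unfolding Lb_def by (simp add: power_divide)
        finally show "\<bar>D1 j (p S + t *\<^sub>R j)\<bar> \<le> Lb" .
      qed
      hence "\<bar>K (p (insert j S)) - K (p S)\<bar> \<le> Lb * \<bar>(v-u) \<bullet> j\<bar>" using pins h_def by simp
      moreover have "\<bar>K (p S) - K u\<bar> \<le> Lb * (\<Sum>i\<in>S. \<bar>(v-u) \<bullet> i\<bar>)" using insert SB by simp
      ultimately show ?case using insert by (simp add: distrib_left)
    qed
  qed
  from this[of Basis] have "\<bar>K (p Basis) - K u\<bar> \<le> Lb * (\<Sum>i\<in>Basis. \<bar>(v-u) \<bullet> i\<bar>)" by simp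
  moreover have "p Basis = v" unfolding p_def by (simp add: euclidean_representation)
  ultimately have "\<bar>K v - K u\<bar> \<le> Lb * (\<Sum>i\<in>Basis. \<bar>(v-u) \<bullet> i\<bar>)" by simp
  also have "\<dots> \<le> Lb * (real DIM('a) * norm (v - u))"
    using Lb0 sum_abs_coordinates_le by (intro mult_left_mono) auto
  finally show ?thesis unfolding Lb_def .
qed

lemma kernel_continuous:
  assumes w: "w \<noteq> 0"
  shows "isCont K w"
  unfolding isCont_def LIM_eq
proof (intro allI impI)
  fix \<epsilon> :: real assume \<epsilon>: "0 < \<epsilon>"
  define dd where "dd = real DIM('a)"
  define Lc where "Lc = CK * (2 / norm w)^(n+1) * dd"
  have dd1: "1 \<le> dd" unfolding dd_def by simp
  have nw: "0 < norm w" using w by simp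
  have Lc0: "0 \<le> Lc" unfolding Lc_def using CK dd1 nw by simp
  define s where "s = min (norm w / (2 * dd)) (\<epsilon> / (Lc + 1))"
  have s0: "0 < s" unfolding s_def using nw dd1 \<epsilon> Lc0 by simp
  show "\<exists>s>0. \<forall>x. x \<noteq> w \<and> norm (x - w) < s \<longrightarrow> norm (K x - K w) < \<epsilon>"
  proof (intro exI[of _ s] conjI allI impI s0)
    fix x assume x: "x \<noteq> w \<and> norm (x - w) < s"
    have "norm (x - w) \<le> norm w / (2 * dd)" using x unfolding s_def by simp
    hence cl: "real DIM('a) * norm (x - w) \<le> norm w / 2" using dd1 unfolding dd_def[symmetric]
      by (simp add: field_simps)
    have "\<bar>K x - K w\<bar> \<le> CK * (2 / norm w)^(n+1) * (real DIM('a) * norm (x - w))"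
      by (rule kernel_lipschitz_far[OF w cl])
    also have "\<dots> = Lc * norm (x - w)" unfolding Lc_def dd_def by simp
    also have "\<dots> \<le> Lc * s" using x Lc0 by (intro mult_left_mono) auto
    also have "\<dots> < (Lc + 1) * (\<epsilon> / (Lc + 1))"
    proof -
      have "Lc * s \<le> Lc * (\<epsilon> / (Lc + 1))" using Lc0 unfolding s_def by (intro mult_left_mono) auto
      also have "\<dots> < (Lc + 1) * (\<epsilon> / (Lc + 1))" using \<epsilon> Lc0 by (intro mult_strict_right_mono) auto
      finally show ?thesis .
    qed
    also have "\<dots> = \<epsilon>" using Lc0 by simp
    finally show "norm (K x - K w) < \<epsilon>" by simp
  qed
qed


(* The truncated kernel is continuous everywhere: off the origin as a product of
   continuous functions, and it vanishes near the origin. *)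
lemma trunc_kernel_continuous:
  assumes \<epsilon>: "0 < \<epsilon>"
  shows "continuous_on UNIV (trunc_kernel \<phi> K \<epsilon>)"
proof (intro continuous_at_imp_continuous_on ballI)
  fix w :: 'a
  show "isCont (trunc_kernel \<phi> K \<epsilon>) w"
  proof (cases "w = 0")
    case False
    have "isCont \<phi> (norm w ^ 2 / \<epsilon> ^ 2)" using False \<epsilon> by (intro DERIV_isCont[OF dphi]) auto
    moreover have "isCont (\<lambda>w. norm w ^ 2 / \<epsilon> ^ 2) w" using \<epsilon> by (intro continuous_intros) auto
    ultimately have "isCont (\<lambda>w. \<phi> (norm w ^ 2 / \<epsilon> ^ 2)) w" by (rule isCont_o2[rotated])
    moreover have "isCont K w" by (rule kernel_continuous[OF False])
    ultimately show ?thesis unfolding trunc_kernel_def phi_eps_def by (intro isCont_mult)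
  next
    case True
    have zero: "trunc_kernel \<phi> K \<epsilon> x = 0" if "norm x < \<epsilon> / 2" for x
    proof -
      have "norm x ^ 2 < (\<epsilon>/2)^2" using that by (intro power_strict_mono) auto
      hence "norm x ^ 2 / \<epsilon> ^ 2 < 1/4" using \<epsilon> by (simp add: field_simps power_divide)
      hence "\<phi> (norm x ^ 2 / \<epsilon> ^ 2) = 0" by (intro z0) auto
      thus ?thesis unfolding trunc_kernel_def phi_eps_def by simp
    qed
    show ?thesis unfolding isCont_def LIM_eq
    proof (intro allI impI)
      fix e :: real assume "0 < e"
      show "\<exists>s>0. \<forall>x. x \<noteq> w \<and> norm (x - w) < s \<longrightarrow> norm (trunc_kernel \<phi> K \<epsilon> x - trunc_kernel \<phi> K \<epsilon> w) < e"
        using zero[of w] zero True \<open>0 < e\<close> \<epsilon> by (intro exI[of _ "\<epsilon>/2"]) auto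
    qed
  qed
qed


subsection \<open>Variation of the profile\<close>

lemma profile_difference_lipschitz:
  assumes ab: "0 < a" "0 < b" and xy: "0 < x" "0 < y"
    and small: "a * max x y \<le> 16" "b * max x y \<le> 16"
  shows "\<bar>(\<phi> (a * x) - \<phi> (b * x)) - (\<phi> (a * y) - \<phi> (b * y))\<bar> \<le> \<bar>a - b\<bar> * (P1 + 16 * P2) * \<bar>x - y\<bar>"
proof -
  define G where "G t = \<phi> (a * t) - \<phi> (b * t)" for t
  have "\<bar>G x - G y\<bar> \<le> \<bar>a - b\<bar> * (P1 + 16 * P2) * \<bar>x - y\<bar>"
  proof (rule mvt_lipschitz_bound[where f' = "\<lambda>t. \<phi>1 (a * t) * a - \<phi>1 (b * t) * b"])
    fix t assume t: "min y x \<le> t" "t \<le> max y x"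
    hence tp: "0 < t" using xy by simp
    have at: "a * t \<le> 16" "b * t \<le> 16"
      using small t ab by (smt (verit) max.commute mult_left_mono)+
    show "(G has_real_derivative \<phi>1 (a * t) * a - \<phi>1 (b * t) * b) (at t)"
      unfolding G_def using tp ab
      by (intro DERIV_diff DERIV_chain2[OF dphi] DERIV_cmult_Id) auto
    have "\<bar>\<phi>1 (a * t) * a - \<phi>1 (b * t) * b\<bar> = \<bar>(a - b) * \<phi>1 (a * t) + b * (\<phi>1 (a * t) - \<phi>1 (b * t))\<bar>"
      by (simp add: algebra_simps)
    also have "\<dots> \<le> \<bar>a - b\<bar> * \<bar>\<phi>1 (a * t)\<bar> + b * \<bar>\<phi>1 (a * t) - \<phi>1 (b * t)\<bar>"
      using ab abs_triangle_ineq[of "(a - b) * \<phi>1 (a * t)" "b * (\<phi>1 (a * t) - \<phi>1 (b * t))"]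
      by (simp add: abs_mult)
    also have "\<dots> \<le> \<bar>a - b\<bar> * P1 + b * (P2 * \<bar>a * t - b * t\<bar>)"
      using ab tp at by (intro add_mono mult_left_mono P1 P2) auto
    also have "b * (P2 * \<bar>a * t - b * t\<bar>) = (b * t) * P2 * \<bar>a - b\<bar>"
    proof -
      have "\<bar>a * t - b * t\<bar> = \<bar>a - b\<bar> * t" using tp by (simp add: abs_mult flip: left_diff_distrib)
      thus ?thesis by (simp add: mult_ac)
    qed
    also have "\<dots> \<le> 16 * P2 * \<bar>a - b\<bar>" using at P20 by (intro mult_right_mono) auto
    finally show "\<bar>\<phi>1 (a * t) * a - \<phi>1 (b * t) * b\<bar> \<le> \<bar>a - b\<bar> * (P1 + 16 * P2)"
      by (simp add: algebra_simps)
  qed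
  thus ?thesis unfolding G_def by (simp add: abs_minus_commute)
qed

(* phi(a t) - phi(b t) vanishes when a t, b t < 1/4 or a t, b t >= 4; hence it does not
   change when t is clamped to an interval [alpha, beta] outside of which this happens. *)
lemma profile_difference_clamp:
  assumes ab: "0 < a" "0 < b" and al0: "0 < \<alpha>" and aal: "a * \<alpha> \<le> 1/8" "b * \<alpha> \<le> 1/8"
    and abe: "4 \<le> a * \<beta>" "4 \<le> b * \<beta>" and alb: "\<alpha> \<le> \<beta>" and t: "0 \<le> t"
  shows "\<phi> (a * t) - \<phi> (b * t) = \<phi> (a * max \<alpha> (min \<beta> t)) - \<phi> (b * max \<alpha> (min \<beta> t))"
proof (cases "t < \<alpha>")
  case True
  hence cm: "max \<alpha> (min \<beta> t) = \<alpha>" using alb by auto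
  have "a * t \<le> a * \<alpha>" "b * t \<le> b * \<alpha>" using True ab by auto
  hence "a * t < 1/4" "b * t < 1/4" "a * \<alpha> < 1/4" "b * \<alpha> < 1/4" using aal by linarith+
  moreover have "0 \<le> a * t" "0 \<le> b * t" "0 \<le> a * \<alpha>" "0 \<le> b * \<alpha>" using t ab al0 by auto
  ultimately have "\<phi> (a * t) = 0" "\<phi> (b * t) = 0" "\<phi> (a * \<alpha>) = 0" "\<phi> (b * \<alpha>) = 0"
    using z0 by blast+
  then show ?thesis unfolding cm by simp
next
  case False
  show ?thesis
  proof (cases "t > \<beta>")
    case True
    hence cm: "max \<alpha> (min \<beta> t) = \<beta>" using alb by auto
    have "a * \<beta> \<le> a * t" "b * \<beta> \<le> b * t" using True ab by auto
    hence "\<phi> (a * t) = 1" "\<phi> (b * t) = 1" "\<phi> (a * \<beta>) = 1" "\<phi> (b * \<beta>) = 1"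
      using abe by (auto intro!: one)
    then show ?thesis unfolding cm by simp
  next
    case False2: False
    hence "max \<alpha> (min \<beta> t) = t" using False by auto
    then show ?thesis by simp
  qed
qed

(* Along a nondecreasing sequence s >= 0, the variation of phi(a s) - phi(b s) for
   comparable a, b is O(|a - b| / min a b): the difference only moves while a s, b s lie
   in [1/4, 4], i.e. while s lies in [1/(8 max a b), 4 / min a b]. *)
lemma profile_difference_variation:
  assumes ab: "0 < a" "0 < b" "a \<le> 4 * b" "b \<le> 4 * a"
    and s0: "\<And>m. 0 \<le> s m" and smono: "\<And>m. s m \<le> s (m+1)"
  shows "window_var N (\<lambda>m. \<phi> (a * s m) - \<phi> (b * s m)) \<le> \<bar>a - b\<bar> * (P1 + 16 * P2) * (4 / min a b)"
proof -
  define \<alpha> where "\<alpha> = 1 / (8 * max a b)"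
  define \<beta> where "\<beta> = 4 / min a b"
  define G where "G x = \<phi> (a * x) - \<phi> (b * x)" for x
  define c where "c m = max \<alpha> (min \<beta> (s m))" for m
  define L where "L = \<bar>a - b\<bar> * (P1 + 16 * P2)"
  have mpos: "0 < min a b" "0 < max a b" using ab by auto
  have al0: "0 < \<alpha>" unfolding \<alpha>_def using mpos by simp
  have aal: "a * \<alpha> \<le> 1/8" "b * \<alpha> \<le> 1/8" unfolding \<alpha>_def using ab by (auto simp: field_simps max_def)
  have abe: "a * \<beta> \<le> 16" "b * \<beta> \<le> 16" "4 \<le> a * \<beta>" "4 \<le> b * \<beta>"
    unfolding \<beta>_def using ab by (auto simp: field_simps min_def)
  have alb: "\<alpha> \<le> \<beta>"
  proof -
    have "a * \<alpha> \<le> a * \<beta>" using aal abe by linarith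
    thus ?thesis using ab by simp
  qed
  have clamp: "G (s m) = G (c m)" for m
    unfolding G_def c_def using ab al0 aal abe alb s0[of m] by (intro profile_difference_clamp) auto
  have L0: "0 \<le> L" unfolding L_def using P10 P20 by simp
  have lip: "\<bar>G x - G y\<bar> \<le> L * \<bar>x - y\<bar>" if "\<alpha> \<le> x" "x \<le> \<beta>" "\<alpha> \<le> y" "y \<le> \<beta>" for x y
  proof -
    have "a * max x y \<le> 16" "b * max x y \<le> 16"
      using abe that ab by (smt (verit) mult_left_mono max_def)+
    thus ?thesis unfolding G_def L_def using that al0 ab
      by (intro profile_difference_lipschitz) auto
  qed
  have "window_var N (\<lambda>m. \<phi> (a * s m) - \<phi> (b * s m)) = window_var N (\<lambda>m. G (c m))"
    unfolding window_var_def using clamp by (simp add: G_def)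
  also have "\<dots> \<le> L * (\<beta> - \<alpha>)"
  proof (rule window_var_lipschitz_comp[OF _ _ _ lip L0])
    fix m
    show "c m \<le> c (m+1)" unfolding c_def using smono[of m] by auto
    show "\<alpha> \<le> c m" "c m \<le> \<beta>" unfolding c_def using alb by auto
  qed auto
  also have "\<dots> \<le> L * \<beta>" using L0 al0 by (intro mult_left_mono) auto
  finally show ?thesis unfolding L_def \<beta>_def .
qed

lemma profile_window_var_le_one:
  assumes s0: "\<And>m. 0 \<le> s m" and smono: "\<And>m. s m \<le> s (m+1)"
  shows "window_var N (\<lambda>m. \<phi> (W^2 * s m)) \<le> 1"
proof -
  have "window_var N (\<lambda>m. \<phi> (W^2 * s m)) \<le> 1 - 0"
  proof (rule window_var_monotone)
    fix m
    show "\<phi> (W\<^sup>2 * s m) \<le> \<phi> (W\<^sup>2 * s (m + 1))" using s0 smono by (intro mono mult_left_mono) auto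
    show "0 \<le> \<phi> (W\<^sup>2 * s m)" "\<phi> (W\<^sup>2 * s m) \<le> 1" using rng[of "W^2 * s m"] s0[of m] by auto
  qed
  thus ?thesis by simp
qed


subsection \<open>Pointwise variation of the truncated kernel\<close>

(* Near regime |u| <= 4 dim r: both profiles have variation <= 1 and |K| <= CK r^-n. *)
lemma pointwise_variation_near:
  assumes s0: "\<And>m. 0 \<le> s m" and smono: "\<And>m. s m \<le> s (m+1)"
    and r: "0 < r" and u: "r < norm u" and v: "r < norm v"
    and near: "norm u \<le> 4 * real DIM('a) * r"
  shows "window_var N (\<lambda>m. \<phi> (norm u^2 * s m) * K u - \<phi> (norm v^2 * s m) * K v)
           \<le> 2 * CK * (4 * real DIM('a))^(n+1) * r / norm u^(n+1)"
proof -
  define dd where "dd = real DIM('a)"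
  have dd1: "1 \<le> dd" unfolding dd_def by simp
  have U0: "0 < norm u" using r u by linarith
  have Kr: "\<bar>K w\<bar> \<le> CK / r^n" if "r < norm w" for w
  proof -
    have "w \<noteq> 0" using that r by auto
    hence "\<bar>K w\<bar> \<le> CK / norm w ^ n" by (rule Kb)
    also have "\<dots> \<le> CK / r^n"
      using CK r that by (intro divide_left_mono power_mono mult_pos_pos zero_less_power) auto
    finally show ?thesis .
  qed
  have "window_var N (\<lambda>m. \<phi> (norm u^2 * s m) * K u - \<phi> (norm v^2 * s m) * K v)
      = window_var N (\<lambda>m. K u * \<phi> (norm u^2 * s m) - K v * \<phi> (norm v^2 * s m))"
    by (simp add: mult.commute)
  also have "\<dots> \<le> window_var N (\<lambda>m. K u * \<phi> (norm u^2 * s m))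
                  + window_var N (\<lambda>m. K v * \<phi> (norm v^2 * s m))"
    by (rule window_var_diff)
  also have "\<dots> = \<bar>K u\<bar> * window_var N (\<lambda>m. \<phi> (norm u^2 * s m))
                  + \<bar>K v\<bar> * window_var N (\<lambda>m. \<phi> (norm v^2 * s m))"
    by (simp add: window_var_cmult)
  also have "\<dots> \<le> \<bar>K u\<bar> * 1 + \<bar>K v\<bar> * 1"
    using profile_window_var_le_one[where s = s, OF s0 smono] by (intro add_mono mult_left_mono) auto
  also have "\<dots> \<le> CK / r^n + CK / r^n" using Kr[OF u] Kr[OF v] by simp
  also have "\<dots> = 2 * CK * (4 * dd)^(n+1) * r / ((4 * dd * r)^(n+1))"
    using r dd1 by (simp add: power_mult_distrib field_simps)
  also have "\<dots> \<le> 2 * CK * (4 * dd)^(n+1) * r / norm u^(n+1)"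
    using near U0 r CK dd1 unfolding dd_def[symmetric]
    by (intro divide_left_mono power_mono mult_pos_pos zero_less_power mult_nonneg_nonneg) auto
  finally show ?thesis unfolding dd_def .
qed

lemma kernel_increment_far:
  assumes r: "0 < r" and far: "4 * real DIM('a) * r < norm u" and uv: "norm (u - v) \<le> 2 * r"
  shows "\<bar>K v - K u\<bar> \<le> CK * 2^(n+2) * real DIM('a) * r / norm u^(n+1)"
proof -
  define dd where "dd = real DIM('a)"
  have dd1: "1 \<le> dd" unfolding dd_def by simp
  have "0 \<le> 4 * dd * r" using r dd1 by simp
  hence U0: "0 < norm u" using far unfolding dd_def by linarith
  have "dd * norm (v - u) \<le> dd * (2 * r)"
    using uv dd1 by (intro mult_left_mono) (auto simp: norm_minus_commute)
  hence cl: "real DIM('a) * norm (v - u) \<le> norm u / 2" using far unfolding dd_def by linarith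
  have "\<bar>K v - K u\<bar> \<le> CK * (2 / norm u)^(n+1) * (dd * norm (v - u))"
    using kernel_lipschitz_far[OF _ cl] U0 unfolding dd_def by auto
  also have "\<dots> \<le> CK * (2 / norm u)^(n+1) * (dd * (2 * r))"
    using uv CK U0 dd1 by (intro mult_left_mono) (auto simp: norm_minus_commute)
  also have "\<dots> = CK * 2^(n+2) * dd * r / norm u^(n+1)" by (simp add: power_divide field_simps)
  finally show ?thesis unfolding dd_def .
qed

(* Far regime: |u|^2 and |v|^2 are comparable and differ by O(r |u|), so the profile
   difference has variation O(r / |u|). *)
lemma profile_increment_far:
  fixes u v :: 'a
  assumes s0: "\<And>m. 0 \<le> s m" and smono: "\<And>m. s m \<le> s (m+1)"
    and r: "0 < r" and far: "4 * real DIM('a) * r < norm u" and uv: "norm (u - v) \<le> 2 * r"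
  shows "window_var N (\<lambda>m. \<phi> (norm u^2 * s m) - \<phi> (norm v^2 * s m))
           \<le> 96 * (P1 + 16 * P2) * r / norm u"
proof -
  define U V a b where "U = norm u" and "V = norm v" and "a = U^2" and "b = V^2"
  note cmp = norm_comparable_far[OF r far uv, folded U_def V_def]
  have "0 \<le> 4 * real DIM('a) * r" using r by simp
  hence U0: "0 < U" using far unfolding U_def by linarith
  hence V0: "0 < V" using cmp by linarith
  have a0: "0 < a" "0 < b" unfolding a_def b_def using U0 V0 by auto
  have ab4: "a \<le> 4 * b" "b \<le> 4 * a"
  proof -
    have "U^2 \<le> (2*V)^2" using cmp U0 by (intro power_mono) auto
    thus "a \<le> 4 * b" unfolding a_def b_def by (simp add: power_mult_distrib)
    have "V^2 \<le> (2*U)^2" using cmp V0 by (intro power_mono) auto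
    thus "b \<le> 4 * a" unfolding a_def b_def by (simp add: power_mult_distrib)
  qed
  have abd: "\<bar>a - b\<bar> \<le> 6 * r * U"
  proof -
    have "a - b = (U + V) * (U - V)" unfolding a_def b_def by (simp add: power2_eq_square algebra_simps)
    hence "\<bar>a - b\<bar> = (U + V) * \<bar>U - V\<bar>" using U0 V0 by (simp add: abs_mult)
    also have "\<dots> \<le> (3 * U) * (2 * r)" using cmp U0 V0 by (intro mult_mono) auto
    finally show ?thesis by (simp add: mult_ac)
  qed
  have minb: "4 / min a b \<le> 16 / U^2"
  proof -
    have "U^2 / 4 \<le> min a b" using ab4 unfolding a_def by auto
    hence "4 / min a b \<le> 4 / (U^2/4)" using U0 a0 by (intro divide_left_mono) auto
    thus ?thesis by simp
  qed
  have "window_var N (\<lambda>m. \<phi> (a * s m) - \<phi> (b * s m)) \<le> \<bar>a - b\<bar> * (P1 + 16 * P2) * (4 / min a b)"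
    by (rule profile_difference_variation[where s = s, OF a0 ab4 s0 smono])
  also have "\<dots> \<le> (6 * r * U) * (P1 + 16 * P2) * (16 / U^2)"
    using abd minb P10 P20 a0 U0 r by (intro mult_mono) auto
  also have "\<dots> = 96 * (P1 + 16 * P2) * r / U" using U0 by (simp add: power2_eq_square field_simps)
  finally show ?thesis unfolding a_def b_def U_def V_def .
qed

(* Far regime: split phi_u K(u) - phi_v K(v) = (K(u) - K(v)) phi_u + K(v) (phi_u - phi_v). *)
lemma pointwise_variation_far:
  assumes s0: "\<And>m. 0 \<le> s m" and smono: "\<And>m. s m \<le> s (m+1)"
    and r: "0 < r" and far: "4 * real DIM('a) * r < norm u" and uv: "norm (u - v) \<le> 2 * r"
  shows "window_var N (\<lambda>m. \<phi> (norm u^2 * s m) * K u - \<phi> (norm v^2 * s m) * K v)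
           \<le> (CK * 2^(n+2) * real DIM('a) + 96 * 2^n * CK * (P1 + 16 * P2)) * r / norm u^(n+1)"
proof -
  define U where "U = norm u"
  note cmp = norm_comparable_far[OF r far uv, folded U_def]
  have "0 \<le> 4 * real DIM('a) * r" using r by simp
  hence U0: "0 < U" using far unfolding U_def by linarith
  have Kv: "\<bar>K v\<bar> \<le> CK * 2^n / U^n"
  proof -
    have "v \<noteq> 0" using cmp U0 by auto
    hence "\<bar>K v\<bar> \<le> CK / norm v ^ n" by (rule Kb)
    also have "\<dots> \<le> CK / (U/2)^n"
      using cmp U0 CK by (intro divide_left_mono power_mono mult_pos_pos zero_less_power) auto
    finally show ?thesis by (simp add: power_divide)
  qed
  have "window_var N (\<lambda>m. \<phi> (norm u^2 * s m) * K u - \<phi> (norm v^2 * s m) * K v)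
      = window_var N (\<lambda>m. (K u - K v) * \<phi> (norm u^2 * s m)
                           + K v * (\<phi> (norm u^2 * s m) - \<phi> (norm v^2 * s m)))"
    by (simp add: algebra_simps)
  also have "\<dots> \<le> window_var N (\<lambda>m. (K u - K v) * \<phi> (norm u^2 * s m))
                  + window_var N (\<lambda>m. K v * (\<phi> (norm u^2 * s m) - \<phi> (norm v^2 * s m)))"
    by (rule window_var_add)
  also have "\<dots> = \<bar>K u - K v\<bar> * window_var N (\<lambda>m. \<phi> (norm u^2 * s m))
                  + \<bar>K v\<bar> * window_var N (\<lambda>m. \<phi> (norm u^2 * s m) - \<phi> (norm v^2 * s m))"
    by (simp add: window_var_cmult)
  also have "\<dots> \<le> (CK * 2^(n+2) * real DIM('a) * r / U^(n+1)) * 1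
                  + (CK * 2^n / U^n) * (96 * (P1 + 16 * P2) * r / U)"
    using kernel_increment_far[OF r far uv] Kv profile_window_var_le_one[where s = s, OF s0 smono]
      profile_increment_far[where s = s, OF s0 smono r far uv] window_var_nonneg
    unfolding U_def by (intro add_mono mult_mono) (auto simp: abs_minus_commute)
  also have "\<dots> = (CK * 2^(n+2) * real DIM('a) + 96 * 2^n * CK * (P1 + 16 * P2)) * r / U^(n+1)"
    using U0 by (simp add: field_simps)
  finally show ?thesis unfolding U_def .
qed

definition variation_const :: real where
  "variation_const = 2 * CK * (4 * real DIM('a))^(n+1) + CK * 2^(n+2) * real DIM('a)
          + 96 * 2^n * CK * (P1 + 16 * P2)"

lemma variation_const_nonneg: "0 \<le> variation_const"
  unfolding variation_const_def using CK P10 P20 by simp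

lemma pointwise_kernel_variation:
  assumes r: "0 < r" and u: "r < norm u" and v: "r < norm v" and uv: "norm (u - v) \<le> 2 * r"
    and e: "\<And>m. 0 < e m" "\<And>m. e (m+1) < e m"
  shows "window_var N (\<lambda>m. trunc_kernel \<phi> K (e m) u - trunc_kernel \<phi> K (e m) v)
           \<le> variation_const * r / norm u^(n+1)"
proof -
  define s where "s m = 1 / (e m)^2" for m
  have s0: "0 \<le> s m" for m unfolding s_def by simp
  have smono: "s m \<le> s (m+1)" for m
    unfolding s_def using e(1)[of m] e(1)[of "m+1"] e(2)[of m]
    by (intro divide_left_mono power_mono mult_pos_pos) auto
  have eq: "trunc_kernel \<phi> K (e m) w = \<phi> (norm w^2 * s m) * K w" for m w
    unfolding trunc_kernel_def phi_eps_def s_def by simp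
  have U0: "0 < norm u" using r u by linarith
  have "window_var N (\<lambda>m. \<phi> (norm u^2 * s m) * K u - \<phi> (norm v^2 * s m) * K v)
          \<le> variation_const * r / norm u^(n+1)"
  proof (cases "norm u \<le> 4 * real DIM('a) * r")
    case True
    have "2 * CK * (4 * real DIM('a))^(n+1) \<le> variation_const" unfolding variation_const_def using CK P10 P20 by simp
    thus ?thesis using pointwise_variation_near[where s = s, OF s0 smono r u v True] r U0
      by (smt (verit) divide_right_mono mult_right_mono zero_less_power)
  next
    case False
    have "CK * 2^(n+2) * real DIM('a) + 96 * 2^n * CK * (P1 + 16 * P2) \<le> variation_const"
      unfolding variation_const_def using CK by simp
    thus ?thesis using pointwise_variation_far[where s = s, OF s0 smono r _ uv] False r U0
      by (smt (verit) divide_right_mono mult_right_mono zero_less_power)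
  qed
  thus ?thesis unfolding eq .
qed


lemma trunc_kernel_bound:
  assumes w: "w \<noteq> 0"
  shows "\<bar>trunc_kernel \<phi> K \<epsilon> w\<bar> \<le> CK / norm w ^ n"
proof -
  have "\<bar>trunc_kernel \<phi> K \<epsilon> w\<bar> = \<bar>\<phi> (norm w ^ 2 / \<epsilon> ^ 2)\<bar> * \<bar>K w\<bar>"
    unfolding trunc_kernel_def phi_eps_def by (simp add: abs_mult)
  also have "\<dots> \<le> 1 * (CK / norm w ^ n)" using rng[of "norm w ^ 2 / \<epsilon> ^ 2"] Kb[OF w]
    by (intro mult_mono) auto
  finally show ?thesis by simp
qed

lemma integrable_trunc_kernel:
  fixes \<nu> :: "'a measure"
  assumes fm: "finite_measure \<nu>" and sb: "sets \<nu> = sets borel" and \<epsilon>: "0 < \<epsilon>" and r: "0 < r"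
    and S: "S \<in> sets borel" and Sd: "\<And>y. y \<in> S \<Longrightarrow> r < dist w y"
  shows "integrable \<nu> (\<lambda>y. indicator S y * trunc_kernel \<phi> K \<epsilon> (w - y))"
proof -
  interpret finite_measure \<nu> by (rule fm)
  show ?thesis
  proof (rule integrable_const_bound[where B = "CK / r^n"])
    show "AE y in \<nu>. norm (indicator S y * trunc_kernel \<phi> K \<epsilon> (w - y)) \<le> CK / r^n"
    proof (intro AE_I2)
      fix y
      show "norm (indicator S y * trunc_kernel \<phi> K \<epsilon> (w - y)) \<le> CK / r^n"
      proof (cases "y \<in> S")
        case True
        have d: "r < norm (w - y)" using Sd[OF True] by (simp add: dist_norm)
        hence "\<bar>trunc_kernel \<phi> K \<epsilon> (w - y)\<bar> \<le> CK / norm (w - y) ^ n"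
          using r by (intro trunc_kernel_bound) auto
        also have "\<dots> \<le> CK / r ^ n"
          using d r CK by (intro divide_left_mono power_mono mult_pos_pos zero_less_power) auto
        finally show ?thesis using True by simp
      qed (use CK r in simp)
    qed
    show "(\<lambda>y. indicator S y * trunc_kernel \<phi> K \<epsilon> (w - y)) \<in> borel_measurable \<nu>"
      using S sb borel_measurable_reflect[OF trunc_kernel_continuous[OF \<epsilon>] sb]
      by (intro borel_measurable_times) auto
  qed
qed

definition trunc_integral :: "'a measure \<Rightarrow> 'a set \<Rightarrow> real \<Rightarrow> 'a \<Rightarrow> real" where
  "trunc_integral \<nu> S \<epsilon> w = (\<integral>y. indicator S y * trunc_kernel \<phi> K \<epsilon> (w - y) \<partial>\<nu>)"

lemma increment_difference_pointwise:
  fixes e :: "int \<Rightarrow> real"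
  assumes r: "0 < r" and x: "x \<in> ball xB r" and z: "z \<in> ball xB r"
    and e: "\<And>m. 0 < e m" "\<And>m. e (m+1) < e m"
  defines "S \<equiv> - ball xB (2*r)"
  defines "g \<equiv> \<lambda>m w y. indicator S y * trunc_kernel \<phi> K (e m) (w - y)"
  shows "(\<Sum>m\<in>{- int N..int N}. \<bar>(g (m+1) x y - g m x y) - (g (m+1) z y - g m z y)\<bar>)
           \<le> variation_const * (indicator S y * (r / norm (x - y)^(n+1)))"
proof (cases "y \<in> S")
  case True
  have d1: "r < norm (x - y)" and d2: "r < norm (z - y)"
    using dist_to_complement_double_ball[OF x] dist_to_complement_double_ball[OF z] True
    unfolding S_def by (auto simp: dist_norm)
  have "norm ((x - y) - (z - y)) = dist x z" by (simp add: dist_norm)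
  also have "\<dots> \<le> dist x xB + dist xB z" by (rule dist_triangle)
  also have "\<dots> \<le> 2 * r" using x z by (simp add: dist_commute)
  finally have d3: "norm ((x - y) - (z - y)) \<le> 2 * r" .
  have "(\<Sum>m\<in>{- int N..int N}. \<bar>(g (m+1) x y - g m x y) - (g (m+1) z y - g m z y)\<bar>)
      = window_var N (\<lambda>m. trunc_kernel \<phi> K (e m) (x - y) - trunc_kernel \<phi> K (e m) (z - y))"
    unfolding window_var_def g_def using True by (intro sum.cong refl) (simp add: algebra_simps)
  also have "\<dots> \<le> variation_const * r / norm (x - y)^(n+1)"
    by (rule pointwise_kernel_variation[where e = e, OF r d1 d2 d3 e])
  finally show ?thesis using True by simp
next
  case False
  thus ?thesis unfolding g_def by simp
qed

lemma increment_difference_one_measure: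
  fixes \<nu> :: "'a measure" and e :: "int \<Rightarrow> real"
  assumes fm: "finite_measure \<nu>" and sb: "sets \<nu> = sets borel"
    and r: "0 < r" and x: "x \<in> ball xB r" and z: "z \<in> ball xB r"
    and e: "\<And>m. 0 < e m" "\<And>m. e (m+1) < e m"
  defines "S \<equiv> - ball xB (2*r)"
  shows "(\<Sum>m\<in>{- int N..int N}.
           \<bar>(trunc_integral \<nu> S (e (m+1)) x - trunc_integral \<nu> S (e m) x)
            - (trunc_integral \<nu> S (e (m+1)) z - trunc_integral \<nu> S (e m) z)\<bar>)
         \<le> variation_const * (\<integral>y. indicator S y * (r / norm (x - y)^(n+1)) \<partial>\<nu>)"
proof -
  have Sb: "S \<in> sets borel" unfolding S_def by simp
  have Sdx: "\<And>y. y \<in> S \<Longrightarrow> r < dist x y" and Sdz: "\<And>y. y \<in> S \<Longrightarrow> r < dist z y"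
    using dist_to_complement_double_ball[OF x] dist_to_complement_double_ball[OF z]
    unfolding S_def by auto
  define g where "g m w y = indicator S y * trunc_kernel \<phi> K (e m) (w - y)" for m w y
  define H where "H m y = (g (m+1) x y - g m x y) - (g (m+1) z y - g m z y)" for m y
  define f where "f y = indicator S y * (r / norm (x - y)^(n+1))" for y
  have gi: "integrable \<nu> (g m x)" "integrable \<nu> (g m z)" for m
    unfolding g_def using integrable_trunc_kernel[OF fm sb e(1) r Sb] Sdx Sdz by auto
  have intH: "integrable \<nu> (H m)" for m unfolding H_def using gi by auto
  have IH: "(\<integral>y. H m y \<partial>\<nu>) = (trunc_integral \<nu> S (e (m+1)) x - trunc_integral \<nu> S (e m) x)
                               - (trunc_integral \<nu> S (e (m+1)) z - trunc_integral \<nu> S (e m) z)" for m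
    unfolding H_def trunc_integral_def g_def[symmetric] using gi by simp
  have "(\<Sum>m\<in>{- int N..int N}. \<bar>\<integral>y. H m y \<partial>\<nu>\<bar>) \<le> (\<Sum>m\<in>{- int N..int N}. (\<integral>y. \<bar>H m y\<bar> \<partial>\<nu>))"
    by (intro sum_mono integral_abs_bound)
  also have "\<dots> = (\<integral>y. (\<Sum>m\<in>{- int N..int N}. \<bar>H m y\<bar>) \<partial>\<nu>)"
    using intH by (intro Bochner_Integration.integral_sum[symmetric] integrable_abs) auto
  also have "\<dots> \<le> (\<integral>y. variation_const * f y \<partial>\<nu>)"
  proof (rule integral_mono')
    show "integrable \<nu> (\<lambda>y. variation_const * f y)"
      unfolding f_def using integrable_decay_profile[OF fm sb r Sb Sdx, of n]
      by (rule Bochner_Integration.integrable_mult_right)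
    show "0 \<le> variation_const * f y" for y unfolding f_def using variation_const_nonneg r by (simp add: indicator_def)
    show "(\<Sum>m\<in>{- int N..int N}. \<bar>H m y\<bar>) \<le> variation_const * f y" for y
      unfolding H_def g_def f_def S_def by (rule increment_difference_pointwise[where e = e, OF r x z e])
  qed
  also have "\<dots> = variation_const * (\<integral>y. f y \<partial>\<nu>)" by simp
  finally show ?thesis unfolding f_def by (simp only: IH)
qed

lemma increment_difference_bound:
  fixes \<nu>1 \<nu>2 :: "'a measure" and e :: "int \<Rightarrow> real"
  assumes fs: "finite_signed_borel \<nu>1 \<nu>2"
    and r: "0 < r" and x: "x \<in> ball xB r" and z: "z \<in> ball xB r"
    and MC: "0 \<le> MC" and Mb: "\<And>R. 0 < R \<Longrightarrow> measure \<nu>1 (ball x R) + measure \<nu>2 (ball x R) \<le> MC * R^n"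
    and e: "\<And>m. 0 < e m" "\<And>m. e (m+1) < e m"
  defines "S \<equiv> - ball xB (2*r)"
  defines "F \<equiv> \<lambda>w \<epsilon>. T_phi \<phi> K (density \<nu>1 (\<lambda>y. indicator S y :: ennreal))
                                (density \<nu>2 (\<lambda>y. indicator S y :: ennreal)) \<epsilon> w"
  shows "(\<Sum>m\<in>{- int N..int N}. \<bar>(F x (e (m+1)) - F x (e m)) - (F z (e (m+1)) - F z (e m))\<bar>)
           \<le> variation_const * 2^(n+1) * MC"
proof -
  have sb1: "sets \<nu>1 = sets borel" and sb2: "sets \<nu>2 = sets borel"
    and fm1: "finite_measure \<nu>1" and fm2: "finite_measure \<nu>2"
    using fs unfolding finite_signed_borel_def by auto
  have Sdx: "\<And>y. y \<in> S \<Longrightarrow> r < dist x y"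
    using dist_to_complement_double_ball[OF x] unfolding S_def by auto
  define D where "D \<nu> m = (trunc_integral \<nu> S (e (m+1)) x - trunc_integral \<nu> S (e m) x)
                          - (trunc_integral \<nu> S (e (m+1)) z - trunc_integral \<nu> S (e m) z)" for \<nu> m
  define I where "I \<nu> = (\<integral>y. indicator S y * (r / norm (x - y)^(n+1)) \<partial>\<nu>)" for \<nu>
  have FI: "F w (e m) = trunc_integral \<nu>1 S (e m) w - trunc_integral \<nu>2 S (e m) w" for w m
    unfolding F_def trunc_integral_def S_def
    by (rule T_phi_restricted[OF sb1 sb2 _ trunc_kernel_continuous[OF e(1)]]) simp
  have "(\<Sum>m\<in>{- int N..int N}. \<bar>(F x (e (m+1)) - F x (e m)) - (F z (e (m+1)) - F z (e m))\<bar>)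
      = (\<Sum>m\<in>{- int N..int N}. \<bar>D \<nu>1 m - D \<nu>2 m\<bar>)"
    unfolding FI D_def by (intro sum.cong refl) (simp add: algebra_simps)
  also have "\<dots> \<le> (\<Sum>m\<in>{- int N..int N}. \<bar>D \<nu>1 m\<bar>) + (\<Sum>m\<in>{- int N..int N}. \<bar>D \<nu>2 m\<bar>)"
    unfolding sum.distrib[symmetric] by (intro sum_mono abs_triangle_ineq4)
  also have "\<dots> \<le> variation_const * I \<nu>1 + variation_const * I \<nu>2"
    unfolding D_def I_def S_def
    by (intro add_mono increment_difference_one_measure[where e = e, OF _ _ r x z e] fm1 sb1 fm2 sb2)
  also have "\<dots> \<le> variation_const * (2^(n+1) * MC)"
    unfolding distrib_left[symmetric] I_def using variation_const_nonneg
    by (intro mult_left_mono decay_integral_bound[OF fm1 sb1 fm2 sb2 r Sdx MC Mb]) auto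
  finally show ?thesis by (simp add: mult.assoc)
qed

lemma oscillation_estimate:
  fixes \<nu>1 \<nu>2 \<mu> :: "'a measure"
  assumes ad: "AD_regular n C0 \<mu>" and xs: "x \<in> supp_meas \<mu>" and fs: "finite_signed_borel \<nu>1 \<nu>2"
    and r: "0 < r" and x: "x \<in> ball xB r" and z: "z \<in> ball xB r" and \<rho>: "1 \<le> \<rho>"
    and C: "0 < C" "variation_const * 2^(n+1) * C0 \<le> C"
  defines "S \<equiv> - ball xB (2*r)"
  defines "F \<equiv> \<lambda>w \<epsilon>. T_phi \<phi> K (density \<nu>1 (\<lambda>y. indicator S y :: ennreal))
                                (density \<nu>2 (\<lambda>y. indicator S y :: ennreal)) \<epsilon> w"
  shows "rho_variation \<rho> (F x) \<le> rho_variation \<rho> (F z) + ereal C * max_mu \<mu> \<nu>1 \<nu>2 x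
       \<and> rho_variation \<rho> (F z) \<le> rho_variation \<rho> (F x) + ereal C * max_mu \<mu> \<nu>1 \<nu>2 x"
proof (cases "max_mu \<mu> \<nu>1 \<nu>2 x = \<infinity>")
  case True
  then show ?thesis using C rho_variation_nonneg[of \<rho> "F x"] rho_variation_nonneg[of \<rho> "F z"] by auto
next
  case False
  then obtain M where M: "max_mu \<mu> \<nu>1 \<nu>2 x = ereal M"
    using max_mu_nonneg[of \<mu> \<nu>1 \<nu>2 x] by (cases "max_mu \<mu> \<nu>1 \<nu>2 x") auto
  have M0: "0 \<le> M" using max_mu_nonneg[of \<mu> \<nu>1 \<nu>2 x] M by simp
  have C0: "0 < C0" using ad unfolding AD_regular_def by simp
  have close: "(\<Sum>m\<in>{- int N..int N}. \<bar>(F x (e (m+1)) - F x (e m)) - (F z (e (m+1)) - F z (e m))\<bar>) \<le> C * M"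
    if e: "\<forall>m. 0 < e m" "\<forall>m. e (m + 1) < e m" for e N
  proof -
    have "(\<Sum>m\<in>{- int N..int N}. \<bar>(F x (e (m+1)) - F x (e m)) - (F z (e (m+1)) - F z (e m))\<bar>)
        \<le> variation_const * 2^(n+1) * (M * C0)"
      unfolding F_def S_def using M0 C0 e max_mu_growth[OF ad xs M]
      by (intro increment_difference_bound[OF fs r x z]) auto
    also have "\<dots> = M * (variation_const * 2^(n+1) * C0)" by (simp add: algebra_simps)
    also have "\<dots> \<le> M * C" using C M0 by (intro mult_left_mono)
    finally show ?thesis by (simp add: mult.commute)
  qed
  have "rho_variation \<rho> (F x) \<le> rho_variation \<rho> (F z) + ereal (C * M)"
    using close by (intro rho_variation_perturbation[OF \<rho>])
  moreover have "rho_variation \<rho> (F z) \<le> rho_variation \<rho> (F x) + ereal (C * M)"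
    using close by (intro rho_variation_perturbation[OF \<rho>]) (simp add: abs_minus_commute)
  ultimately show ?thesis unfolding M by simp
qed

end

lemma profile_shape:
  assumes "phiR_admissible \<phi>"
  shows "\<And>t. 0 \<le> t \<Longrightarrow> 0 \<le> \<phi> t \<and> \<phi> t \<le> 1"
    and "\<And>t. 0 \<le> t \<Longrightarrow> t < 1/4 \<Longrightarrow> \<phi> t = 0"
    and "\<And>t. 4 \<le> t \<Longrightarrow> \<phi> t = 1"
    and "\<And>s t. 0 \<le> s \<Longrightarrow> s \<le> t \<Longrightarrow> \<phi> s \<le> \<phi> t"
proof -
  have m: "mono_on {0..} \<phi>" and nn: "\<forall>t\<ge>0. 0 \<le> \<phi> t"
    and ind: "\<forall>t\<ge>0. (indicator {4..} t :: real) \<le> \<phi> t \<and> \<phi> t \<le> (indicator {1/4..} t :: real)"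
    using assms unfolding phiR_admissible_def by blast+
  show "0 \<le> \<phi> t \<and> \<phi> t \<le> 1" if "0 \<le> t" for t
  proof -
    have "\<phi> t \<le> (indicator {1/4..} t :: real)" using ind[rule_format, OF that(1)] by (rule conjunct2)
    moreover have "(indicator {1/4..} t :: real) \<le> 1" by (simp add: indicator_def)
    moreover have "0 \<le> \<phi> t" using nn that by auto
    ultimately show ?thesis by linarith
  qed
  show "\<phi> t = 0" if "0 \<le> t" "t < 1/4" for t
  proof -
    have "\<phi> t \<le> (indicator {1/4..} t :: real)" using ind[rule_format, OF that(1)] by (rule conjunct2)
    moreover have "(indicator {1/4..} t :: real) = 0" using that by (simp add: indicator_def)
    moreover have "0 \<le> \<phi> t" using nn that by auto
    ultimately show ?thesis by linarith
  qed
  show "\<phi> t = 1" if "4 \<le> t" for t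
  proof -
    have "(indicator {4..} t :: real) \<le> \<phi> t \<and> \<phi> t \<le> (indicator {1/4..} t :: real)" using ind that by (meson order_trans zero_le_numeral)
    moreover have "(indicator {1/4..} t :: real) = 1" "(indicator {4..} t :: real) = 1" using that by auto
    ultimately show ?thesis by linarith
  qed
  show "\<phi> s \<le> \<phi> t" if "0 \<le> s" "s \<le> t" for s t
    using m that by (auto simp: mono_on_def)
qed

(* Since phi is C^2 on [0,oo), its derivative is bounded and Lipschitz on [0,16]. *)
lemma profile_derivative_bounds:
  assumes "phiR_admissible \<phi>"
  obtains \<phi>1 P1 P2 where
    "\<And>t. 0 < t \<Longrightarrow> (\<phi> has_real_derivative \<phi>1 t) (at t)"
    "\<And>t. 0 \<le> t \<Longrightarrow> t \<le> 16 \<Longrightarrow> \<bar>\<phi>1 t\<bar> \<le> P1"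
    "\<And>s t. 0 < s \<Longrightarrow> s \<le> 16 \<Longrightarrow> 0 < t \<Longrightarrow> t \<le> 16 \<Longrightarrow> \<bar>\<phi>1 s - \<phi>1 t\<bar> \<le> P2 * \<bar>s - t\<bar>"
    "0 \<le> P1" "0 \<le> P2"
proof -
  obtain \<phi>1 \<phi>2 where d: "\<forall>t\<ge>0. (\<phi> has_real_derivative \<phi>1 t) (at t within {0..}) \<and>
                      (\<phi>1 has_real_derivative \<phi>2 t) (at t within {0..})"
    and c2: "continuous_on {0..} \<phi>2"
    using assms unfolding phiR_admissible_def by blast
  have at: "(\<phi> has_real_derivative \<phi>1 t) (at t)" "(\<phi>1 has_real_derivative \<phi>2 t) (at t)" if "0 < t" for t
  proof -
    have "at t within {0..} = at t" using that by (intro at_within_interior) auto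
    moreover have "0 \<le> t" using that by simp
    hence "(\<phi> has_real_derivative \<phi>1 t) (at t within {0..}) \<and>
                      (\<phi>1 has_real_derivative \<phi>2 t) (at t within {0..})" using d by simp
    ultimately show "(\<phi> has_real_derivative \<phi>1 t) (at t)" "(\<phi>1 has_real_derivative \<phi>2 t) (at t)"
      by simp_all
  qed
  have c1: "continuous_on {0..} \<phi>1" using d by (intro DERIV_continuous_on[where D = \<phi>2]) simp
  have "compact (\<phi>1 ` {0..16})" using c1 by (intro compact_continuous_image) (auto intro: continuous_on_subset)
  hence "bounded (\<phi>1 ` {0..16})" by (rule compact_imp_bounded)
  then obtain P1 where P1: "\<forall>x\<in>\<phi>1 ` {0..16}. norm x \<le> P1" unfolding bounded_iff by blast
  have "compact (\<phi>2 ` {0..16})" using c2 by (intro compact_continuous_image) (auto intro: continuous_on_subset)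
  hence "bounded (\<phi>2 ` {0..16})" by (rule compact_imp_bounded)
  then obtain P2 where P2: "\<forall>x\<in>\<phi>2 ` {0..16}. norm x \<le> P2" unfolding bounded_iff by blast
  have "norm (\<phi>1 0) \<le> P1" using P1 by auto
  hence P10: "0 \<le> P1" by (meson norm_ge_zero order_trans)
  have "norm (\<phi>2 0) \<le> P2" using P2 by auto
  hence P20: "0 \<le> P2" by (meson norm_ge_zero order_trans)
  show ?thesis
  proof (rule that[of \<phi>1 P1 P2])
    show "\<And>s t. 0 < s \<Longrightarrow> s \<le> 16 \<Longrightarrow> 0 < t \<Longrightarrow> t \<le> 16 \<Longrightarrow> \<bar>\<phi>1 s - \<phi>1 t\<bar> \<le> P2 * \<bar>s - t\<bar>"
    proof -
      fix s t :: real assume st: "0 < s" "s \<le> 16" "0 < t" "t \<le> 16"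
      show "\<bar>\<phi>1 s - \<phi>1 t\<bar> \<le> P2 * \<bar>s - t\<bar>"
      proof (rule mvt_lipschitz_bound[where f' = \<phi>2])
        fix x assume "min t s \<le> x" "x \<le> max t s"
        with st have x: "0 < x" "x \<le> 16" by auto
        show "(\<phi>1 has_real_derivative \<phi>2 x) (at x)" using at x by auto
        show "\<bar>\<phi>2 x\<bar> \<le> P2" using P2 x by auto
      qed
    qed
  qed (use at P1 P10 P20 in auto)
qed

lemma kernel_profile_of_admissible:
  fixes K :: "'a::euclidean_space \<Rightarrow> real"
  assumes "admissible_kernel n K" and "phiR_admissible \<phi>"
  shows "\<exists>\<phi>1 D1 CK P1 P2. kernel_profile K \<phi> \<phi>1 D1 CK P1 P2 n"
proof -
  obtain CK D1 where CK: "CK > 0" and KK: "\<forall>x. x \<noteq> 0 \<longrightarrow> \<bar>K x\<bar> \<le> CK / norm x ^ n \<and>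
          (\<forall>i\<in>Basis. ((\<lambda>t. K (x + t *\<^sub>R i)) has_real_derivative D1 i x) (at 0) \<and>
             \<bar>D1 i x\<bar> \<le> CK / norm x ^ (n + 1))"
    using assms(1) unfolding admissible_kernel_def by blast
  obtain \<phi>1 P1 P2 where pd:
    "\<And>t. 0 < t \<Longrightarrow> (\<phi> has_real_derivative \<phi>1 t) (at t)"
    "\<And>t. 0 \<le> t \<Longrightarrow> t \<le> 16 \<Longrightarrow> \<bar>\<phi>1 t\<bar> \<le> P1"
    "\<And>s t. 0 < s \<Longrightarrow> s \<le> 16 \<Longrightarrow> 0 < t \<Longrightarrow> t \<le> 16 \<Longrightarrow> \<bar>\<phi>1 s - \<phi>1 t\<bar> \<le> P2 * \<bar>s - t\<bar>"
    "0 \<le> P1" "0 \<le> P2"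
    using profile_derivative_bounds[OF assms(2)] by metis
  have Kb: "\<And>x. x \<noteq> 0 \<Longrightarrow> \<bar>K x\<bar> \<le> CK / norm x ^ n"
    and der: "\<And>x i. x \<noteq> 0 \<Longrightarrow> i \<in> Basis \<Longrightarrow> ((\<lambda>t. K (x + t *\<^sub>R i)) has_real_derivative D1 i x) (at 0)"
    and bnd: "\<And>x i. x \<noteq> 0 \<Longrightarrow> i \<in> Basis \<Longrightarrow> \<bar>D1 i x\<bar> \<le> CK / norm x ^ (n+1)"
    using KK by blast+
  have "kernel_profile K \<phi> \<phi>1 D1 CK P1 P2 n"
    by unfold_locales (use Kb der bnd CK profile_shape[OF assms(2)] pd in auto)
  thus ?thesis by blast
qed

theorem mainTheorem5:
  fixes n :: nat and K :: "'a::euclidean_space \<Rightarrow> real" and \<rho> C0 :: real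
    and \<phi> :: "real \<Rightarrow> real"
  assumes "1 \<le> n" and "n < DIM('a)" and "2 < \<rho>"
    and "admissible_kernel n K" and "phiR_admissible \<phi>"
  shows "\<exists>C>0. \<forall>(\<mu> :: 'a measure) \<nu>1 \<nu>2 xB r x z.
     AD_regular n C0 \<mu> \<and> \<not> bounded (supp_meas \<mu>) \<and> finite_signed_borel \<nu>1 \<nu>2 \<and>
     0 < r \<and> x \<in> ball xB r \<and> x \<in> supp_meas \<mu> \<and> z \<in> ball xB r \<longrightarrow>
     (let \<nu>1' = density \<nu>1 (\<lambda>y. indicator (- ball xB (2 * r)) y :: ennreal);
          \<nu>2' = density \<nu>2 (\<lambda>y. indicator (- ball xB (2 * r)) y :: ennreal);
          Vx = rho_variation \<rho> (\<lambda>\<epsilon>. T_phi \<phi> K \<nu>1' \<nu>2' \<epsilon> x);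
          Vz = rho_variation \<rho> (\<lambda>\<epsilon>. T_phi \<phi> K \<nu>1' \<nu>2' \<epsilon> z)
      in Vx \<le> Vz + ereal C * max_mu \<mu> \<nu>1 \<nu>2 x \<and> Vz \<le> Vx + ereal C * max_mu \<mu> \<nu>1 \<nu>2 x)"
proof -
  obtain \<phi>1 D1 CK P1 P2 where "kernel_profile K \<phi> \<phi>1 D1 CK P1 P2 n"
    using kernel_profile_of_admissible[OF assms(4,5)] by blast
  then interpret kernel_profile K \<phi> \<phi>1 D1 CK P1 P2 n .
  define C where "C = variation_const * 2^(n+1) * \<bar>C0\<bar> + 1"
  have "variation_const * 2^(n+1) * C0 \<le> variation_const * 2^(n+1) * \<bar>C0\<bar>"
    using variation_const_nonneg by (intro mult_left_mono) auto
  moreover have "0 \<le> variation_const * 2^(n+1) * \<bar>C0\<bar>" using variation_const_nonneg by simp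
  ultimately have C: "0 < C" "variation_const * 2^(n+1) * C0 \<le> C" unfolding C_def by linarith+
  show ?thesis
    unfolding Let_def
    by (intro exI[of _ C] conjI[OF C(1)] allI impI, elim conjE,
        rule oscillation_estimate[OF _ _ _ _ _ _ _ C]) (use assms(3) in auto)
qed

end
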